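(* Let $V$ be a vertex operator algebra, $z\in\mathbb C^\times$, $W_1,W_2,W_3$ generalized $V$-modules, and $F$ a quasi-$P(z)$-intertwining map of type $\binom{W_3}{W_1\,W_2}$. Then the generalized $V$-module $F^\vee(W_3')\subset(W_1\otimes W_2)^*$ (ordinary if $W_3$ is ordinary) is $P(z)$-compatible if and only if $F$ is a $P(z)$-intertwining map.
   Context: $V$ is a vertex operator algebra. A generalized $V$-module is a weak $V$-module $W=\coprod_{n\in\mathbb C}W_{[n]}$ with $W_{[n]}$ the generalized $L(0)$-eigenspace of eigenvalue $n$, each finite-dimensional, $W_{[n+k]}=0$ for integers $k$ sufficiently negative; ordinary if $L(0)$ is semisimple. $\overline W=\prod_nW_{[n]}$; $W'$ is the contragredient module, $\langle Y'(v,x)\alpha,w\rangle=\langle\alpha,Y(e^{xL(1)}(-x^{-2})^{L(0)}v,x^{-1})w\rangle$. A quasi-$P(z)$-intertwining map of type $\binom{W_3}{W_1\,W_2}$ is a linear $F:W_1\otimes W_2\to\overline W_3$ with $Y_3(v,x_1)F(w_{(1)}\otimes w_{(2)})-F(w_{(1)}\otimes Y_2(v,x_1)w_{(2)})=\mathrm{Res}_{x_0}z^{-1}\delta(\frac{x_1-x_0}{z})F(Y_1(v,x_0)w_{(1)}\otimes w_{(2)})$ for all $v\in V,w_{(1)}\in W_1,w_{(2)}\in W_2$. It is a $P(z)$-intertwining map if moreover $x_0^{-1}\delta(\frac{x_1-z}{x_0})Y_3(v,x_1)F(w_{(1)}\otimes w_{(2)})=z^{-1}\delta(\frac{x_1-x_0}{z})F(Y_1(v,x_0)w_{(1)}\otimes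 w_{(2)})+x_0^{-1}\delta(\frac{z-x_1}{-x_0})F(w_{(1)}\otimes Y_2(v,x_1)w_{(2)})$. $F^\vee(\alpha)(w_{(1)}\otimes w_{(2)})=\langle\alpha,F(w_{(1)}\otimes w_{(2)})\rangle$. For $v\in V$, $\lambda\in(W_1\otimes W_2)^*$, define $\tau_{P(z)}\big(x_0^{-1}\delta(\frac{x_1^{-1}-z}{x_0})Y_t(v,x_1)\big)\lambda$ as the functional $w_{(1)}\otimes w_{(2)}\mapsto z^{-1}\delta(\frac{x_1^{-1}-x_0}{z})\lambda(Y_1(e^{x_1L(1)}(-x_1^{-2})^{L(0)}v,x_0)w_{(1)}\otimes w_{(2)})+x_0^{-1}\delta(\frac{z-x_1^{-1}}{-x_0})\lambda(w_{(1)}\otimes Y_2(e^{x_1L(1)}(-x_1^{-2})^{L(0)}v,x_1^{-1})w_{(2)})$, and $\tau_{P(z)}(Y_t(v,x_1))\lambda$ as its residue in $x_0$; $V\otimes\mathbb C[t,t^{-1}]$ acts by letting $v\otimes t^n$ act as the coefficient of $x_1^{-n-1}$ in $\tau_{P(z)}(Y_t(v,x_1))$, and $F^\vee(W_3')$ is a $V$-module under this action. $\lambda$ satisfies the $P(z)$-compatibility condition if for each $v$, $\tau_{P(z)}(v\otimes t^n)\lambda=0$ for $n\gg0$ and $\tau_{P(z)}\big(x_0^{-1}\delta(\frac{x_1^{-1}-z}{x_0})Y_t(v,x_1)\big)\lambda=x_0^{-1}\delta(\frac{x_1^{-1}-z}{x_0})\tau_{P(z)}(Y_t(v,x_1))\lambda$.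 A subspace is $P(z)$-compatible if all its elements satisfy this condition. *)

theory Defs
  imports Complex_Main
begin

class cvs = ab_group_add +
  fixes scaleC :: "complex \<Rightarrow> 'a \<Rightarrow> 'a" (infixr \<open>*\<^sub>C\<close> 75)
  assumes scaleC_add_right: "c *\<^sub>C (x + y) = c *\<^sub>C x + c *\<^sub>C y"
    and scaleC_add_left: "(b + c) *\<^sub>C x = b *\<^sub>C x + c *\<^sub>C x"
    and scaleC_scaleC: "b *\<^sub>C (c *\<^sub>C x) = (b * c) *\<^sub>C x"
    and scaleC_one: "1 *\<^sub>C x = x"

instantiation complex :: cvs
begin
definition scaleC_complex :: "complex \<Rightarrow> complex \<Rightarrow> complex" where
  "scaleC_complex c x = c * x"
instance by standard (auto simp: scaleC_complex_def algebra_simps)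
end

definition clinear :: "('a::cvs \<Rightarrow> 'b::cvs) \<Rightarrow> bool" where
  "clinear f \<longleftrightarrow> (\<forall>x y. f (x + y) = f x + f y) \<and> (\<forall>c x. f (c *\<^sub>C x) = c *\<^sub>C f x)"

definition cspan :: "'a::cvs set \<Rightarrow> 'a set" where
  "cspan S = {x. \<exists>B c. finite B \<and> B \<subseteq> S \<and> x = (\<Sum>b\<in>B. c b *\<^sub>C b)}"

definition fin_dim :: "'a::cvs set \<Rightarrow> bool" where
  "fin_dim S \<longleftrightarrow> (\<exists>B. finite B \<and> S \<subseteq> cspan B)"

text \<open>Sum of a finitely supported family (0 if the support is infinite; in all uses
  below the support is finite).\<close>
definition fsum :: "('i \<Rightarrow> 'a::comm_monoid_add) \<Rightarrow> 'a" where
  "fsum f = (if finite {i. f i \<noteq> 0} then (\<Sum>i\<in>{i. f i \<noteq> 0}. f i) else 0)"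

definition dproj :: "('i \<Rightarrow> 'a::cvs set) \<Rightarrow> 'i \<Rightarrow> 'a \<Rightarrow> 'a" where
  "dproj E i w = (THE u. u \<in> E i \<and> w - u \<in> cspan (\<Union>j\<in>-{i}. E j))"

text \<open>A vertex operator is encoded by its modes: \<open>Y v m w = v\<^sub>m w\<close>, i.e.
  \<open>Y(v,x)w = \<Sum>\<^sub>m (Y v m w) x\<^sup>-\<^sup>m\<^sup>-\<^sup>1\<close>. The Jacobi identity is written in its
  component form (coefficient of \<open>x\<^sub>0\<^sup>-\<^sup>l\<^sup>-\<^sup>1 x\<^sub>1\<^sup>-\<^sup>m\<^sup>-\<^sup>1 x\<^sub>2\<^sup>-\<^sup>n\<^sup>-\<^sup>1\<close>), the Borcherds identity.\<close>

definition bilinear_op :: "('v::cvs \<Rightarrow> int \<Rightarrow> 'w::cvs \<Rightarrow> 'w) \<Rightarrow> bool" where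
  "bilinear_op Y \<longleftrightarrow> (\<forall>m. (\<forall>v. clinear (\<lambda>w. Y v m w)) \<and> (\<forall>w. clinear (\<lambda>v. Y v m w)))"

definition borcherds :: "('v::cvs \<Rightarrow> int \<Rightarrow> 'v \<Rightarrow> 'v) \<Rightarrow> ('v \<Rightarrow> int \<Rightarrow> 'w::cvs \<Rightarrow> 'w) \<Rightarrow> bool" where
  "borcherds Y YW \<longleftrightarrow> (\<forall>u v w l m n.
     fsum (\<lambda>i::nat. ((of_int m :: complex) gchoose i) *\<^sub>C YW (Y u (l + int i) v) (m + n - int i) w)
   = fsum (\<lambda>i::nat. ((-1) ^ i * ((of_int l :: complex) gchoose i)) *\<^sub>C
        (YW u (l + m - int i) (YW v (n + int i) w)
         - ((-1) powi l) *\<^sub>C YW v (l + n - int i) (YW u (m + int i) w))))"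

definition Vgr :: "('v::cvs \<Rightarrow> int \<Rightarrow> 'v \<Rightarrow> 'v) \<Rightarrow> 'v \<Rightarrow> int \<Rightarrow> 'v set" where
  "Vgr Y om n = {v. Y om 1 v = of_int n *\<^sub>C v}"  \<comment> \<open>\<open>V\<^sub>(\<^sub>n\<^sub>)\<close>: \<open>L(0) = \<omega>\<^sub>1\<close> acts as n\<close>

definition VOA :: "('v::cvs \<Rightarrow> int \<Rightarrow> 'v \<Rightarrow> 'v) \<Rightarrow> 'v \<Rightarrow> 'v \<Rightarrow> complex \<Rightarrow> bool" where
  "VOA Y vac om c \<longleftrightarrow>
     bilinear_op Y
   \<and> (\<forall>u v. \<exists>N. \<forall>m\<ge>N. Y u m v = 0)
   \<and> (\<forall>m v. Y vac m v = (if m = -1 then v else 0))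
   \<and> (\<forall>v m. m \<ge> 0 \<longrightarrow> Y v m vac = 0) \<and> (\<forall>v. Y v (-1) vac = v)
   \<and> borcherds Y Y
   \<and> (\<forall>m n v. Y om (m + 1) (Y om (n + 1) v) - Y om (n + 1) (Y om (m + 1) v)
        = of_int (m - n) *\<^sub>C Y om (m + n + 1) v
          + (if m + n = 0 then (of_int (m ^ 3 - m) / 12 * c) *\<^sub>C v else 0))
   \<and> (\<forall>u m w. Y (Y om 0 u) m w = (- of_int m) *\<^sub>C Y u (m - 1) w)
   \<and> (\<forall>v. v \<in> cspan (\<Union>n. Vgr Y om n))
   \<and> (\<forall>n. fin_dim (Vgr Y om n))
   \<and> (\<exists>K. \<forall>n<K. Vgr Y om n = {0})
   \<and> vac \<in> Vgr Y om 0 \<and> om \<in> Vgr Y om 2"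

definition gen_eig :: "('w::cvs \<Rightarrow> 'w) \<Rightarrow> complex \<Rightarrow> 'w set" where
  "gen_eig L0 n = {w. \<exists>k. ((\<lambda>x. L0 x - n *\<^sub>C x) ^^ k) w = 0}"

definition Wgr :: "('v \<Rightarrow> int \<Rightarrow> 'w::cvs \<Rightarrow> 'w) \<Rightarrow> 'v \<Rightarrow> complex \<Rightarrow> 'w set" where
  "Wgr YW om n = gen_eig (YW om 1) n"

text \<open>Generalized V-module (the whole type 'w is the module): a weak module
  (lower truncation, vacuum property, Jacobi identity) graded by generalized
  \<open>L(0)\<close>-eigenspaces, finite-dimensional and lower-truncated.\<close>
definition gen_module :: "('v::cvs \<Rightarrow> int \<Rightarrow> 'v \<Rightarrow> 'v) \<Rightarrow> 'v \<Rightarrow> 'v \<Rightarrow> ('v \<Rightarrow> int \<Rightarrow> 'w::cvs \<Rightarrow> 'w) \<Rightarrow> bool" where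
  "gen_module Y vac om YW \<longleftrightarrow>
     bilinear_op YW
   \<and> (\<forall>v w. \<exists>N. \<forall>m\<ge>N. YW v m w = 0)
   \<and> (\<forall>m w. YW vac m w = (if m = -1 then w else 0))
   \<and> borcherds Y YW
   \<and> (\<forall>w. w \<in> cspan (\<Union>n. Wgr YW om n))
   \<and> (\<forall>n. fin_dim (Wgr YW om n))
   \<and> (\<forall>n. \<exists>K. \<forall>k::int. k < K \<longrightarrow> Wgr YW om (n + of_int k) = {0})"

text \<open>\<open>\<overline>W = \<Prod>\<^sub>n W\<^sub>[\<^sub>n\<^sub>]\<close>: families of homogeneous components.\<close>
definition Wbar :: "('v \<Rightarrow> int \<Rightarrow> 'w::cvs \<Rightarrow> 'w) \<Rightarrow> 'v \<Rightarrow> (complex \<Rightarrow> 'w) set" where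
  "Wbar YW om = {f. \<forall>n. f n \<in> Wgr YW om n}"

definition bar_mode :: "('v \<Rightarrow> int \<Rightarrow> 'w::cvs \<Rightarrow> 'w) \<Rightarrow> 'v \<Rightarrow> 'v \<Rightarrow> int \<Rightarrow> (complex \<Rightarrow> 'w) \<Rightarrow> (complex \<Rightarrow> 'w)" where
  "bar_mode YW om v m f = (\<lambda>k. fsum (\<lambda>p. dproj (Wgr YW om) k (YW v m (f p))))"

text \<open>Contragredient space \<open>W' = \<Oplus>\<^sub>n W\<^sub>[\<^sub>n\<^sub>]\<^sup>*\<close> as functionals on W vanishing on all
  but finitely many \<open>W\<^sub>[\<^sub>n\<^sub>]\<close>, and its pairing with \<open>\<overline>W\<close>.\<close>
definition gdual :: "('v \<Rightarrow> int \<Rightarrow> 'w::cvs \<Rightarrow> 'w) \<Rightarrow> 'v \<Rightarrow> ('w \<Rightarrow> complex) set" where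
  "gdual YW om = {\<alpha>. clinear \<alpha> \<and> finite {n. \<exists>w\<in>Wgr YW om n. \<alpha> w \<noteq> 0}}"

definition pair :: "('w \<Rightarrow> complex) \<Rightarrow> (complex \<Rightarrow> 'w) \<Rightarrow> complex" where
  "pair \<alpha> f = fsum (\<lambda>n. \<alpha> (f n))"

text \<open>A series is a coefficient function on exponent pairs (power of \<open>x\<^sub>0\<close>, power of \<open>x\<^sub>1\<close>).
  A monomial \<open>(c,(p,q))\<close> stands for \<open>c x\<^sub>0\<^sup>p x\<^sub>1\<^sup>q\<close>.
  \<open>delta_ser P A B D\<close> is \<open>P \<cdot> \<delta>((A+B)/D) = P \<Sum>\<^sub>n\<^sub>\<in>\<^sub>\<int> D\<^sup>-\<^sup>n (A+B)\<^sup>n\<close>, where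
  \<open>(A+B)\<^sup>n\<close> is expanded in nonnegative powers of the second summand B.\<close>

type_synonym mono = "complex \<times> (int \<times> int)"

definition delta_ser :: "mono \<Rightarrow> mono \<Rightarrow> mono \<Rightarrow> mono \<Rightarrow> int \<times> int \<Rightarrow> complex" where
  "delta_ser P A B D t = fsum (\<lambda>(n::int, i::nat).
     if fst (snd P) - n * fst (snd D) + (n - int i) * fst (snd A) + int i * fst (snd B) = fst t
      \<and> snd (snd P) - n * snd (snd D) + (n - int i) * snd (snd A) + int i * snd (snd B) = snd t
     then fst P * (fst D) powi (-n) * ((of_int n :: complex) gchoose i) * (fst A) powi (n - int i) * (fst B) ^ i
     else 0)"

definition ser_mult :: "(int \<times> int \<Rightarrow> complex) \<Rightarrow> (int \<times> int \<Rightarrow> 'm::cvs) \<Rightarrow> int \<times> int \<Rightarrow> 'm" where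
  "ser_mult d g t = fsum (\<lambda>s. d s *\<^sub>C g (fst t - fst s, snd t - snd s))"

definition bar_mult :: "(int \<times> int \<Rightarrow> complex) \<Rightarrow> (int \<times> int \<Rightarrow> complex \<Rightarrow> 'm::cvs) \<Rightarrow> int \<times> int \<Rightarrow> complex \<Rightarrow> 'm" where
  "bar_mult d g t = (\<lambda>k. ser_mult d (\<lambda>s. g s k) t)"

definition x0m :: mono where "x0m = (1, (1, 0))"
definition x1m :: mono where "x1m = (1, (0, 1))"
definition x1invm :: mono where "x1invm = (1, (0, -1))"
definition cm :: "complex \<Rightarrow> mono" where "cm c = (c, (0, 0))"
definition negm :: "mono \<Rightarrow> mono" where "negm a = (- fst a, snd a)"
definition invm :: "mono \<Rightarrow> mono" where "invm a = (inverse (fst a), (- fst (snd a), - snd (snd a)))"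

text \<open>F : \<open>W\<^sub>1 \<otimes> W\<^sub>2 \<rightarrow> \<overline>W\<^sub>3\<close> is encoded as a bilinear map \<open>W\<^sub>1 \<times> W\<^sub>2 \<rightarrow> \<overline>W\<^sub>3\<close>.\<close>
definition bar_map :: "('v \<Rightarrow> int \<Rightarrow> 'c::cvs \<Rightarrow> 'c) \<Rightarrow> 'v \<Rightarrow> ('a::cvs \<Rightarrow> 'b::cvs \<Rightarrow> complex \<Rightarrow> 'c) \<Rightarrow> bool" where
  "bar_map Y3 om F \<longleftrightarrow> (\<forall>w1 w2. F w1 w2 \<in> Wbar Y3 om)
     \<and> (\<forall>k. (\<forall>w1. clinear (\<lambda>w2. F w1 w2 k)) \<and> (\<forall>w2. clinear (\<lambda>w1. F w1 w2 k)))"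

definition quasi_intw :: "'v::cvs \<Rightarrow> complex \<Rightarrow> ('v \<Rightarrow> int \<Rightarrow> 'a::cvs \<Rightarrow> 'a) \<Rightarrow> ('v \<Rightarrow> int \<Rightarrow> 'b::cvs \<Rightarrow> 'b)
    \<Rightarrow> ('v \<Rightarrow> int \<Rightarrow> 'c::cvs \<Rightarrow> 'c) \<Rightarrow> ('a \<Rightarrow> 'b \<Rightarrow> complex \<Rightarrow> 'c) \<Rightarrow> bool" where
  "quasi_intw om z Y1 Y2 Y3 F \<longleftrightarrow> bar_map Y3 om F \<and>
    (\<forall>v w1 w2 k. \<comment> \<open>coefficient of \<open>x\<^sub>1\<^sup>k\<close>\<close>
       (\<lambda>n. bar_mode Y3 om v (-k-1) (F w1 w2) n - F w1 (Y2 v (-k-1) w2) n)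
     = bar_mult (delta_ser (invm (cm z)) x1m (negm x0m) (cm z))
         (\<lambda>(a,b). if b = 0 then F (Y1 v (-a-1) w1) w2 else (\<lambda>_. 0)) (-1, k))"

definition P_intw :: "'v::cvs \<Rightarrow> complex \<Rightarrow> ('v \<Rightarrow> int \<Rightarrow> 'a::cvs \<Rightarrow> 'a) \<Rightarrow> ('v \<Rightarrow> int \<Rightarrow> 'b::cvs \<Rightarrow> 'b)
    \<Rightarrow> ('v \<Rightarrow> int \<Rightarrow> 'c::cvs \<Rightarrow> 'c) \<Rightarrow> ('a \<Rightarrow> 'b \<Rightarrow> complex \<Rightarrow> 'c) \<Rightarrow> bool" where
  "P_intw om z Y1 Y2 Y3 F \<longleftrightarrow> quasi_intw om z Y1 Y2 Y3 F \<and>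
    (\<forall>v w1 w2 t n.
       bar_mult (delta_ser (invm x0m) x1m (negm (cm z)) x0m)
         (\<lambda>(a,b). if a = 0 then bar_mode Y3 om v (-b-1) (F w1 w2) else (\<lambda>_. 0)) t n
     = bar_mult (delta_ser (invm (cm z)) x1m (negm x0m) (cm z))
         (\<lambda>(a,b). if b = 0 then F (Y1 v (-a-1) w1) w2 else (\<lambda>_. 0)) t n
     + bar_mult (delta_ser (invm x0m) (cm z) (negm x1m) (negm x0m))
         (\<lambda>(a,b). if a = 0 then F w1 (Y2 v (-b-1) w2) else (\<lambda>_. 0)) t n)"

definition Fdual :: "('v \<Rightarrow> int \<Rightarrow> 'c::cvs \<Rightarrow> 'c) \<Rightarrow> 'v \<Rightarrow> ('a \<Rightarrow> 'b \<Rightarrow> complex \<Rightarrow> 'c) \<Rightarrow> ('a \<Rightarrow> 'b \<Rightarrow> complex) set" where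
  "Fdual Y3 om F = {(\<lambda>w1 w2. pair \<alpha> (F w1 w2)) | \<alpha>. \<alpha> \<in> gdual Y3 om}"

text \<open>\<open>e\<^sup>x\<^sup>L\<^sup>(\<^sup>1\<^sup>)(-x\<^sup>-\<^sup>2)\<^sup>L\<^sup>(\<^sup>0\<^sup>) v\<close> as a V-valued series in x: coefficient of \<open>x\<^sup>b\<close>.\<close>
definition opp_ser :: "('v::cvs \<Rightarrow> int \<Rightarrow> 'v \<Rightarrow> 'v) \<Rightarrow> 'v \<Rightarrow> 'v \<Rightarrow> int \<Rightarrow> 'v" where
  "opp_ser Y om v b = fsum (\<lambda>(j::nat, k::int).
     if int j - 2 * k = b
     then ((-1) powi k / of_nat (fact j)) *\<^sub>C ((Y om 2) ^^ j) (dproj (Vgr Y om) k v)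
     else 0)"

text \<open>\<open>\<tau>\<^sub>P\<^sub>(\<^sub>z\<^sub>)(x\<^sub>0\<^sup>-\<^sup>1\<delta>((x\<^sub>1\<^sup>-\<^sup>1-z)/x\<^sub>0) Y\<^sub>t(v,x\<^sub>1))\<lambda>\<close>, a series in \<open>x\<^sub>0,x\<^sub>1\<close> of functionals on
  \<open>W\<^sub>1 \<otimes> W\<^sub>2\<close> (encoded as bilinear forms), evaluated at \<open>w\<^sub>1 \<otimes> w\<^sub>2\<close>.\<close>
definition tau_delta :: "('v::cvs \<Rightarrow> int \<Rightarrow> 'v \<Rightarrow> 'v) \<Rightarrow> 'v \<Rightarrow> complex \<Rightarrow> ('v \<Rightarrow> int \<Rightarrow> 'a::cvs \<Rightarrow> 'a)
    \<Rightarrow> ('v \<Rightarrow> int \<Rightarrow> 'b::cvs \<Rightarrow> 'b) \<Rightarrow> 'v \<Rightarrow> ('a \<Rightarrow> 'b \<Rightarrow> complex) \<Rightarrow> int \<times> int \<Rightarrow> 'a \<Rightarrow> 'b \<Rightarrow> complex" where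
  "tau_delta Y om z Y1 Y2 v lam t w1 w2 =
     ser_mult (delta_ser (invm (cm z)) x1invm (negm x0m) (cm z))
       (\<lambda>(a,b). lam (Y1 (opp_ser Y om v b) (-a-1) w1) w2) t
   + ser_mult (delta_ser (invm x0m) (cm z) (negm x1invm) (negm x0m))
       (\<lambda>(a,b). if a = 0 then fsum (\<lambda>c. lam w1 (Y2 (opp_ser Y om v c) (b - c - 1) w2)) else 0) t"

text \<open>\<open>\<tau>\<^sub>P\<^sub>(\<^sub>z\<^sub>)(Y\<^sub>t(v,x\<^sub>1))\<lambda>\<close> = residue in \<open>x\<^sub>0\<close>; coefficient of \<open>x\<^sub>1\<^sup>b\<close>.
  \<open>\<tau>\<^sub>P\<^sub>(\<^sub>z\<^sub>)(v \<otimes> t\<^sup>n)\<lambda>\<close> is the coefficient of \<open>x\<^sub>1\<^sup>-\<^sup>n\<^sup>-\<^sup>1\<close>.\<close>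
definition tau_Y :: "('v::cvs \<Rightarrow> int \<Rightarrow> 'v \<Rightarrow> 'v) \<Rightarrow> 'v \<Rightarrow> complex \<Rightarrow> ('v \<Rightarrow> int \<Rightarrow> 'a::cvs \<Rightarrow> 'a)
    \<Rightarrow> ('v \<Rightarrow> int \<Rightarrow> 'b::cvs \<Rightarrow> 'b) \<Rightarrow> 'v \<Rightarrow> ('a \<Rightarrow> 'b \<Rightarrow> complex) \<Rightarrow> int \<Rightarrow> 'a \<Rightarrow> 'b \<Rightarrow> complex" where
  "tau_Y Y om z Y1 Y2 v lam b = tau_delta Y om z Y1 Y2 v lam (-1, b)"

definition tau_mode :: "('v::cvs \<Rightarrow> int \<Rightarrow> 'v \<Rightarrow> 'v) \<Rightarrow> 'v \<Rightarrow> complex \<Rightarrow> ('v \<Rightarrow> int \<Rightarrow> 'a::cvs \<Rightarrow> 'a)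
    \<Rightarrow> ('v \<Rightarrow> int \<Rightarrow> 'b::cvs \<Rightarrow> 'b) \<Rightarrow> 'v \<Rightarrow> int \<Rightarrow> ('a \<Rightarrow> 'b \<Rightarrow> complex) \<Rightarrow> 'a \<Rightarrow> 'b \<Rightarrow> complex" where
  "tau_mode Y om z Y1 Y2 v n lam = tau_Y Y om z Y1 Y2 v lam (-n-1)"

definition P_compatible :: "('v::cvs \<Rightarrow> int \<Rightarrow> 'v \<Rightarrow> 'v) \<Rightarrow> 'v \<Rightarrow> complex \<Rightarrow> ('v \<Rightarrow> int \<Rightarrow> 'a::cvs \<Rightarrow> 'a)
    \<Rightarrow> ('v \<Rightarrow> int \<Rightarrow> 'b::cvs \<Rightarrow> 'b) \<Rightarrow> ('a \<Rightarrow> 'b \<Rightarrow> complex) \<Rightarrow> bool" where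
  "P_compatible Y om z Y1 Y2 lam \<longleftrightarrow> (\<forall>v.
     (\<exists>N. \<forall>n\<ge>N. tau_mode Y om z Y1 Y2 v n lam = (\<lambda>_ _. 0))
   \<and> (\<forall>t w1 w2. tau_delta Y om z Y1 Y2 v lam t w1 w2
        = ser_mult (delta_ser (invm x0m) x1invm (negm (cm z)) x0m)
            (\<lambda>(a,b). if a = 0 then tau_Y Y om z Y1 Y2 v lam b w1 w2 else 0) t))"

definition P_compatible_set :: "('v::cvs \<Rightarrow> int \<Rightarrow> 'v \<Rightarrow> 'v) \<Rightarrow> 'v \<Rightarrow> complex \<Rightarrow> ('v \<Rightarrow> int \<Rightarrow> 'a::cvs \<Rightarrow> 'a)
    \<Rightarrow> ('v \<Rightarrow> int \<Rightarrow> 'b::cvs \<Rightarrow> 'b) \<Rightarrow> ('a \<Rightarrow> 'b \<Rightarrow> complex) set \<Rightarrow> bool" where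
  "P_compatible_set Y om z Y1 Y2 S \<longleftrightarrow> (\<forall>lam\<in>S. P_compatible Y om z Y1 Y2 lam)"

end

theory Submission
  imports Defs
begin

(* Write J(u) for the defect of the Jacobi identity of F at u in V, i.e. the difference of the
   two sides of the P(z)-intertwining identity, a formal series with values in the completion
   of W3. For lambda = alpha o F with alpha in W3', unfolding tau_P(z) and using the
   quasi-intertwining identity shows that the defect of the P(z)-compatibility identity of
   lambda at v is <alpha, sum_e J(v_e)>, where the v_e are the coefficients of
   exp(x L(1)) (-x^-2)^L(0) v. The truncation condition holds for every quasi-intertwining map.
   So if F is P(z)-intertwining then F^vee(W3') is P(z)-compatible. Conversely, for v of weight h
   the v_e are (-1)^h v and multiples of L(1)^j v (j >= 1), which have lower weight; since
   weights are bounded below, induction on the weight gives <alpha, J(v)> = 0 for all alpha,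
   and W3' separates the points of the completion, so J(v) = 0. *)

section \<open>Complex vector spaces and finitely supported sums\<close>

global_interpretation cv: vector_space "scaleC :: complex \<Rightarrow> 'a \<Rightarrow> 'a::cvs"
  by unfold_locales (simp_all add: scaleC_add_right scaleC_add_left scaleC_scaleC scaleC_one)

lemma cspan_eq_span: "cspan S = cv.span S"
  unfolding cspan_def cv.span_explicit by blast

lemma clinear_add: "clinear f \<Longrightarrow> f (x + y) = f x + f y"
  unfolding clinear_def by blast

lemma clinear_scale: "clinear f \<Longrightarrow> f (c *\<^sub>C x) = c *\<^sub>C f x"
  unfolding clinear_def by blast

lemma clinear_zero: "clinear f \<Longrightarrow> f 0 = 0"
  using clinear_scale[of f 0 0] by simp

lemma clinear_diff: "clinear f \<Longrightarrow> f (x - y) = f x - f y"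
  using clinear_add[of f "x - y" y] by (simp add: eq_diff_eq)

lemma clinear_sum: "clinear f \<Longrightarrow> f (sum g A) = (\<Sum>x\<in>A. f (g x))"
  by (induction A rule: infinite_finite_induct) (auto simp: clinear_zero clinear_add)

lemma clinear_comp: "clinear f \<Longrightarrow> clinear g \<Longrightarrow> clinear (\<lambda>x. f (g x))"
  unfolding clinear_def by auto

lemma clinear_funpow: "clinear (f :: 'a::cvs \<Rightarrow> 'a) \<Longrightarrow> clinear (f ^^ k)"
  by (induction k) (simp_all add: clinear_def)

lemma clinear_shift: "clinear T \<Longrightarrow> clinear (\<lambda>x. T x - n *\<^sub>C x)"
  unfolding clinear_def
  by (simp add: scaleC_add_right cv.scale_right_diff_distrib scaleC_scaleC mult.commute)

lemma scaleC_complex [simp]: "c *\<^sub>C (x::complex) = c * x"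
  by (simp add: scaleC_complex_def)

lemma scaleC_left_commute: "a *\<^sub>C (b *\<^sub>C x) = b *\<^sub>C (a *\<^sub>C (x::'a::cvs))"
  by (simp add: scaleC_scaleC mult.commute)

definition fsupp :: "('i \<Rightarrow> 'a::zero) \<Rightarrow> bool" where
  "fsupp f \<longleftrightarrow> finite {i. f i \<noteq> 0}"

lemma fsuppI: "finite A \<Longrightarrow> (\<And>x. x \<notin> A \<Longrightarrow> f x = 0) \<Longrightarrow> fsupp f"
  unfolding fsupp_def by (metis (mono_tags, lifting) finite_subset mem_Collect_eq subsetI)

lemma fsuppE:
  assumes "fsupp f"
  obtains A where "finite A" "\<And>x. x \<notin> A \<Longrightarrow> f x = 0"
  using assms unfolding fsupp_def by blast

lemma fsum_eq_sum:
  assumes "finite A" "\<And>x. x \<notin> A \<Longrightarrow> f x = 0"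
  shows "fsum f = sum f A"
proof -
  have sub: "{i. f i \<noteq> 0} \<subseteq> A" using assms(2) by blast
  then have "finite {i. f i \<noteq> 0}" using assms(1) finite_subset by blast
  moreover have "sum f A = sum f {i. f i \<noteq> 0}"
    by (rule sum.mono_neutral_right[OF assms(1) sub]) auto
  ultimately show ?thesis unfolding fsum_def by simp
qed

lemma fsum_zero [simp]: "fsum (\<lambda>_. 0) = 0"
  by (simp add: fsum_def)

lemma fsum_zero': "(\<And>x. f x = 0) \<Longrightarrow> fsum f = 0"
  by (simp add: fsum_def)

lemma fsum_nonzero: "fsum f \<noteq> 0 \<Longrightarrow> \<exists>x. f x \<noteq> 0"
  using fsum_zero'[of f] by blast

lemma fsum_single: "(\<And>y. y \<noteq> x \<Longrightarrow> f y = 0) \<Longrightarrow> fsum f = f x"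
  using fsum_eq_sum[of "{x}" f] by auto

lemma fsum_cong: "(\<And>x. f x = g x) \<Longrightarrow> fsum f = fsum g"
  by (metis ext)

lemma fsupp_add: "fsupp f \<Longrightarrow> fsupp g \<Longrightarrow> fsupp (\<lambda>x. f x + (g x :: 'a::comm_monoid_add))"
  unfolding fsupp_def by (rule finite_subset[of _ "{i. f i \<noteq> 0} \<union> {i. g i \<noteq> 0}"]) auto

lemma fsum_add:
  assumes "fsupp f" "fsupp g"
  shows "fsum (\<lambda>x. f x + g x) = fsum f + fsum (g :: _ \<Rightarrow> 'a::comm_monoid_add)"
proof -
  obtain A where A: "finite A" "\<And>x. x \<notin> A \<Longrightarrow> f x = 0" using assms(1) by (rule fsuppE) blast
  obtain B where B: "finite B" "\<And>x. x \<notin> B \<Longrightarrow> g x = 0" using assms(2) by (rule fsuppE) blast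
  have "fsum (\<lambda>x. f x + g x) = sum (\<lambda>x. f x + g x) (A \<union> B)"
    by (rule fsum_eq_sum) (use A B in auto)
  also have "\<dots> = sum f (A \<union> B) + sum g (A \<union> B)" by (simp add: sum.distrib)
  also have "sum f (A \<union> B) = fsum f" by (rule fsum_eq_sum[symmetric]) (use A B in auto)
  also have "sum g (A \<union> B) = fsum g" by (rule fsum_eq_sum[symmetric]) (use A B in auto)
  finally show ?thesis .
qed

lemma fsupp_sum:
  "finite I \<Longrightarrow> (\<And>i. i \<in> I \<Longrightarrow> fsupp (f i)) \<Longrightarrow> fsupp (\<lambda>x. \<Sum>i\<in>I. (f i x :: 'a::comm_monoid_add))"
proof (induction I rule: finite_induct)
  case (insert a I)
  then have "fsupp (\<lambda>x. f a x + (\<Sum>i\<in>I. f i x))" by (intro fsupp_add) auto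
  then show ?case using insert(1,2) by simp
qed (simp add: fsupp_def)

lemma fsum_sum:
  assumes "finite I" "\<And>i. i \<in> I \<Longrightarrow> fsupp (f i)"
  shows "fsum (\<lambda>x. \<Sum>i\<in>I. f i x) = (\<Sum>i\<in>I. fsum (f i :: _ \<Rightarrow> 'a::comm_monoid_add))"
  using assms
proof (induction I rule: finite_induct)
  case (insert a I)
  have "fsupp (\<lambda>x. \<Sum>i\<in>I. f i x)" using insert by (simp add: fsupp_sum)
  then have "fsum (\<lambda>x. f a x + (\<Sum>i\<in>I. f i x)) = fsum (f a) + fsum (\<lambda>x. \<Sum>i\<in>I. f i x)"
    using insert by (simp add: fsum_add)
  then show ?case using insert by simp
qed simp

lemma fsum_scaleC: "fsum (\<lambda>x. c *\<^sub>C f x) = c *\<^sub>C fsum (f :: _ \<Rightarrow> 'a::cvs)"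
proof (cases "c = 0")
  case False
  then have "{x. c *\<^sub>C f x \<noteq> 0} = {x. f x \<noteq> 0}" by auto
  then show ?thesis unfolding fsum_def using False by (simp add: cv.scale_sum_right)
qed simp

lemma fsum_mult_if:
  "fsum (\<lambda>e. d * (if P then X e else 0)) = d * (if P then fsum X else (0::complex))"
  using fsum_scaleC[of d X] by simp

lemma fsum_clinear:
  assumes "clinear \<phi>" "fsupp f"
  shows "\<phi> (fsum f) = fsum (\<lambda>x. \<phi> (f x))"
proof -
  obtain A where A: "finite A" "\<And>x. x \<notin> A \<Longrightarrow> f x = 0" using assms(2) by (rule fsuppE) blast
  then show ?thesis
    using assms(1) by (simp add: fsum_eq_sum[OF A] fsum_eq_sum[of A] clinear_sum clinear_zero)
qed

lemma fsupp_clinear: "clinear \<phi> \<Longrightarrow> fsupp f \<Longrightarrow> fsupp (\<lambda>x. \<phi> (f x))"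
  by (elim fsuppE, rule fsuppI) (auto simp: clinear_zero)

lemma fsum_reindex_bij:
  assumes "bij h"
  shows "fsum (\<lambda>x. f (h x)) = fsum f"
proof -
  have eq: "{x. f (h x) \<noteq> 0} = inv h ` {y. f y \<noteq> 0}"
    using assms by (auto simp: bij_inv_eq_iff image_iff) (metis assms bij_inv_eq_iff)
  have inj: "inj_on (inv h) {y. f y \<noteq> 0}"
    using assms by (meson bij_imp_bij_inv bij_is_inj inj_on_subset subset_UNIV)
  have fin: "finite {x. f (h x) \<noteq> 0} \<longleftrightarrow> finite {y. f y \<noteq> 0}"
    unfolding eq using finite_image_iff[OF inj] by simp
  have "sum (\<lambda>x. f (h x)) (inv h ` {y. f y \<noteq> 0}) = sum (\<lambda>y. f (h (inv h y))) {y. f y \<noteq> 0}"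
    by (rule sum.reindex[OF inj, unfolded comp_def])
  also have "\<dots> = sum f {y. f y \<noteq> 0}" using assms by (simp add: surj_f_inv_f[OF bij_is_surj])
  finally show ?thesis unfolding fsum_def fin eq[symmetric] by simp
qed

lemma fsum_reflect_snd: "fsum (\<lambda>s::int \<times> int. f s) = fsum (\<lambda>s. f (fst s, - snd s))"
proof -
  have "bij (\<lambda>s::int \<times> int. (fst s, - snd s))"
    by (rule o_bij[of "\<lambda>s. (fst s, - snd s)"]) (auto simp: comp_def)
  then show ?thesis using fsum_reindex_bij[of "\<lambda>s. (fst s, - snd s)" f] by simp
qed

lemma fsum_swap:
  assumes "finite A" "finite B" "\<And>x y. x \<notin> A \<or> y \<notin> B \<Longrightarrow> f x y = 0"
  shows "fsum (\<lambda>x. fsum (\<lambda>y. f x y)) = fsum (\<lambda>y. fsum (\<lambda>x. f x y :: 'a::comm_monoid_add))"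
proof -
  have "fsum (\<lambda>x. fsum (\<lambda>y. f x y)) = (\<Sum>x\<in>A. \<Sum>y\<in>B. f x y)"
    by (subst fsum_eq_sum[OF assms(1)]) (auto intro!: fsum_zero' sum.cong fsum_eq_sum assms)
  also have "\<dots> = (\<Sum>y\<in>B. \<Sum>x\<in>A. f x y)" by (rule sum.swap)
  also have "\<dots> = fsum (\<lambda>y. fsum (\<lambda>x. f x y))"
    by (subst fsum_eq_sum[OF assms(2)]) (auto intro!: fsum_zero' sum.cong fsum_eq_sum[symmetric] assms)
  finally show ?thesis .
qed

lemma uniform_bound_below_finite:
  assumes "finite C" "\<And>c. \<exists>M::int. \<forall>m\<le>M. P c m"
  shows "\<exists>M. \<forall>c\<in>C. \<forall>m\<le>M. P c m"
proof -
  have "eventually (\<lambda>m. \<forall>c\<in>C. P c m) at_bot"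
    using assms by (intro eventually_ball_finite) (auto simp: eventually_at_bot_linorder)
  then show ?thesis unfolding eventually_at_bot_linorder by blast
qed

lemma uniform_bound_above_finite:
  assumes "finite C" "\<And>c. \<exists>N::int. \<forall>m\<ge>N. P c m"
  shows "\<exists>N. \<forall>c\<in>C. \<forall>m\<ge>N. P c m"
proof -
  have "eventually (\<lambda>m. \<forall>c\<in>C. P c m) at_top"
    using assms by (intro eventually_ball_finite) (auto simp: eventually_at_top_linorder)
  then show ?thesis unfolding eventually_at_top_linorder by blast
qed

section \<open>Direct sums and generalized eigenspaces\<close>

locale indep_subspaces =
  fixes E :: "'i \<Rightarrow> 'a::cvs set"
  assumes subspace: "\<And>i. cv.subspace (E i)"
    and independent: "\<And>z J. finite J \<Longrightarrow> (\<And>j. z j \<in> E j) \<Longrightarrow> sum z J = 0 \<Longrightarrow> \<forall>j\<in>J. z j = 0"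
begin

lemma zero_in [simp]: "0 \<in> E i"
  using subspace cv.subspace_0 by blast

lemma add_in: "x \<in> E i \<Longrightarrow> y \<in> E i \<Longrightarrow> x + y \<in> E i"
  using subspace cv.subspace_add by blast

lemma scale_in: "x \<in> E i \<Longrightarrow> c *\<^sub>C x \<in> E i"
  using subspace cv.subspace_scale by blast

lemma diff_in: "x \<in> E i \<Longrightarrow> y \<in> E i \<Longrightarrow> x - y \<in> E i"
  using subspace cv.subspace_diff by blast

lemma fsum_in: "(\<And>x. f x \<in> E i) \<Longrightarrow> fsum f \<in> E i"
  unfolding fsum_def by (auto intro: cv.subspace_sum[OF subspace])

lemma span_decomp:
  assumes "x \<in> cv.span (\<Union>j\<in>I. E j)"
  shows "\<exists>z J. finite J \<and> J \<subseteq> I \<and> (\<forall>j. z j \<in> E j) \<and> (\<forall>j. j \<notin> J \<longrightarrow> z j = 0) \<and> x = sum z J"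
  using assms
proof (induction rule: cv.span_induct_alt)
  case base
  show ?case by (rule exI[of _ "\<lambda>_. 0"], rule exI[of _ "{}"]) auto
next
  case (step c x y)
  from step(1) obtain j0 where j0: "j0 \<in> I" "x \<in> E j0" by blast
  from step(2) obtain z J where zJ: "finite J" "J \<subseteq> I" "\<forall>j. z j \<in> E j" "\<forall>j. j \<notin> J \<longrightarrow> z j = 0" "y = sum z J"
    by blast
  define z' where "z' = z(j0 := c *\<^sub>C x + z j0)"
  have "sum z' (insert j0 J) = c *\<^sub>C x + sum z (insert j0 J)"
    using zJ(1) by (simp add: z'_def sum.insert_remove sum.If_cases Diff_eq add.assoc)
  also have "sum z (insert j0 J) = sum z J"
    using zJ(1,4) by (cases "j0 \<in> J") (auto simp: insert_absorb)
  finally have "c *\<^sub>C x + y = sum z' (insert j0 J)" using zJ(5) by simp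
  then show ?case
    using zJ j0 by (intro exI[of _ z'] exI[of _ "insert j0 J"]) (auto simp: z'_def intro!: add_in scale_in)
qed

lemma decomp_unique:
  assumes "finite J" "\<And>j. z j \<in> E j" "\<And>j. j \<notin> J \<Longrightarrow> z j = 0"
    and "finite J'" "\<And>j. z' j \<in> E j" "\<And>j. j \<notin> J' \<Longrightarrow> z' j = 0"
    and "sum z J = sum z' J'"
  shows "z k = z' k"
proof -
  let ?K = "J \<union> J'"
  have "sum z ?K = sum z J" by (rule sum.mono_neutral_right) (use assms in auto)
  moreover have "sum z' ?K = sum z' J'" by (rule sum.mono_neutral_right) (use assms in auto)
  ultimately have "sum (\<lambda>j. z j - z' j) ?K = 0" using assms(7) by (simp add: sum_subtractf)
  then have "\<forall>j\<in>?K. z j - z' j = 0"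
    using independent[of ?K "\<lambda>j. z j - z' j"] assms by (auto intro: diff_in)
  then show ?thesis using assms(3,6) by (cases "k \<in> ?K") auto
qed

lemma dproj_eq:
  assumes "finite J" "\<And>j. z j \<in> E j" "\<And>j. j \<notin> J \<Longrightarrow> z j = 0"
  shows "dproj E k (sum z J) = z k"
  unfolding dproj_def
proof (rule the_equality)
  have "sum z J - z k = sum (z(k := 0)) J"
    using assms(1,3) by (cases "k \<in> J") (auto simp: sum.remove intro!: sum.cong)
  also have "\<dots> \<in> cspan (\<Union>j\<in>-{k}. E j)" unfolding cspan_eq_span
    by (rule cv.span_sum) (use assms(2) in \<open>auto intro: cv.span_base simp: cv.span_zero\<close>)
  finally show "z k \<in> E k \<and> sum z J - z k \<in> cspan (\<Union>j\<in>-{k}. E j)" using assms(2) by simp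
next
  fix u assume u: "u \<in> E k \<and> sum z J - u \<in> cspan (\<Union>j\<in>-{k}. E j)"
  then obtain y J' where y: "finite J'" "J' \<subseteq> -{k}" "\<forall>j. y j \<in> E j" "\<forall>j. j \<notin> J' \<longrightarrow> y j = 0"
    "sum z J - u = sum y J'"
    using span_decomp[of "sum z J - u" "-{k}"] unfolding cspan_eq_span by blast
  define y' where "y' = y(k := u)"
  have kJ: "k \<notin> J'" using y(2) by blast
  have "sum y' (insert k J') = u + sum y J'"
    using y(1) kJ by (simp add: y'_def) (intro sum.cong, auto)
  then have "sum z J = sum y' (insert k J')" using y(5) by (simp add: algebra_simps)
  then have "z k = y' k"
    using decomp_unique[of J z "insert k J'" y' k] assms y(1,3,4) u by (auto simp: y'_def)
  then show "u = z k" by (simp add: y'_def)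
qed

lemma dproj_mem: "x \<in> E j \<Longrightarrow> dproj E k x = (if k = j then x else 0)"
  using dproj_eq[of "{j}" "\<lambda>i. if i = j then x else 0" k] by auto

end

locale direct_sum = indep_subspaces +
  assumes spanning: "\<And>w. w \<in> cspan (\<Union>n. E n)"
begin

lemma decompE:
  obtains z J where "finite J" "\<forall>j. z j \<in> E j" "\<forall>j. j \<notin> J \<longrightarrow> z j = 0" "w = sum z J"
  using span_decomp[of w UNIV] spanning[of w] unfolding cspan_eq_span by blast

lemma dproj_in: "dproj E k w \<in> E k"
  by (rule decompE[of w]) (auto simp: dproj_eq)

lemma dproj_finite_support: "\<exists>H. finite H \<and> (\<forall>h. h \<notin> H \<longrightarrow> dproj E h w = 0)"
  by (rule decompE[of w]) (auto simp: dproj_eq)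

lemma sum_dproj:
  assumes "finite H" "\<forall>h. h \<notin> H \<longrightarrow> dproj E h w = 0"
  shows "w = (\<Sum>h\<in>H. dproj E h w)"
proof (rule decompE[of w])
  fix z J assume zJ: "finite J" "\<forall>j. z j \<in> E j" "\<forall>j. j \<notin> J \<longrightarrow> z j = 0" "w = sum z J"
  then have d: "dproj E h w = z h" for h by (simp add: dproj_eq)
  have "sum z J = sum z (J \<union> H)" by (rule sum.mono_neutral_left) (use zJ(1,3) assms(1) in auto)
  also have "\<dots> = sum z H" by (rule sum.mono_neutral_right) (use zJ(1) assms d in auto)
  finally show ?thesis using zJ(4) d by simp
qed

lemma dproj_add: "dproj E k (x + y) = dproj E k x + dproj E k y"
proof -
  obtain H where "finite H" "\<forall>h. h \<notin> H \<longrightarrow> dproj E h x = 0" using dproj_finite_support by blast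
  moreover obtain H' where "finite H'" "\<forall>h. h \<notin> H' \<longrightarrow> dproj E h y = 0" using dproj_finite_support by blast
  ultimately have x: "x = (\<Sum>h\<in>H \<union> H'. dproj E h x)" and y: "y = (\<Sum>h\<in>H \<union> H'. dproj E h y)"
    by (auto intro!: sum_dproj)
  have "x + y = (\<Sum>h\<in>H \<union> H'. dproj E h x + dproj E h y)"
    by (subst x, subst y) (simp add: sum.distrib)
  also have "dproj E k \<dots> = dproj E k x + dproj E k y"
    using \<open>finite H\<close> \<open>finite H'\<close> \<open>\<forall>h. h \<notin> H \<longrightarrow> dproj E h x = 0\<close> \<open>\<forall>h. h \<notin> H' \<longrightarrow> dproj E h y = 0\<close>
    by (intro dproj_eq) (auto intro: add_in dproj_in)
  finally show ?thesis .
qed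

lemma dproj_scale: "dproj E k (c *\<^sub>C x) = c *\<^sub>C dproj E k x"
proof (rule decompE[of x])
  fix z J assume z: "finite J" "\<forall>j. z j \<in> E j" "\<forall>j. j \<notin> J \<longrightarrow> z j = 0" "x = sum z J"
  then have "c *\<^sub>C x = sum (\<lambda>j. c *\<^sub>C z j) J" by (simp add: cv.scale_sum_right)
  then show ?thesis using z by (simp add: dproj_eq scale_in)
qed

lemma dproj_clinear: "clinear (dproj E k)"
  unfolding clinear_def using dproj_add dproj_scale by blast

end

lemma funpow_commute: "(\<And>x. f (g x) = g (f x)) \<Longrightarrow> (f ^^ k) (g x) = g ((f ^^ k) x)"
  by (induction k) auto

lemma funpow_clinear_zero_mono:
  fixes S :: "'a::cvs \<Rightarrow> 'a"
  assumes "clinear S" "(S ^^ k) w = 0" "k \<le> l"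
  shows "(S ^^ l) w = 0"
proof -
  have "(S ^^ l) w = (S ^^ ((l - k) + k)) w" using assms(3) by simp
  also have "\<dots> = (S ^^ (l - k)) ((S ^^ k) w)" by (simp only: funpow_add comp_apply)
  finally show ?thesis using assms(2) clinear_zero[OF clinear_funpow[OF assms(1)]] by simp
qed

lemma gen_eig_subspace:
  assumes T: "clinear T"
  shows "cv.subspace (gen_eig T n)"
proof -
  let ?S = "\<lambda>x. T x - n *\<^sub>C x"
  have S: "clinear ?S" using clinear_shift[OF T] .
  have SK: "clinear (?S ^^ k)" for k using clinear_funpow[OF S] .
  show ?thesis unfolding cv.subspace_def gen_eig_def
  proof (intro conjI ballI allI)
    show "0 \<in> {w. \<exists>k. (?S ^^ k) w = 0}" by (auto intro: exI[of _ 0])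
  next
    fix x y assume "x \<in> {w. \<exists>k. (?S ^^ k) w = 0}" "y \<in> {w. \<exists>k. (?S ^^ k) w = 0}"
    then obtain k l where k: "(?S ^^ k) x = 0" and l: "(?S ^^ l) y = 0" by blast
    have "(?S ^^ max k l) x = 0" by (rule funpow_clinear_zero_mono[OF S k]) simp
    moreover have "(?S ^^ max k l) y = 0" by (rule funpow_clinear_zero_mono[OF S l]) simp
    ultimately have "(?S ^^ max k l) (x + y) = 0" by (simp add: clinear_add[OF SK])
    then show "x + y \<in> {w. \<exists>k. (?S ^^ k) w = 0}" by blast
  next
    fix c x assume "x \<in> {w. \<exists>k. (?S ^^ k) w = 0}"
    then obtain k where "(?S ^^ k) x = 0" by blast
    then have "(?S ^^ k) (c *\<^sub>C x) = 0" by (simp add: clinear_scale[OF SK])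
    then show "c *\<^sub>C x \<in> {w. \<exists>k. (?S ^^ k) w = 0}" by blast
  qed
qed

lemma gen_eig_shift_invariant:
  assumes T: "clinear T" and x: "x \<in> gen_eig T n"
  shows "T x - m *\<^sub>C x \<in> gen_eig T n"
proof -
  let ?S = "\<lambda>x. T x - n *\<^sub>C x" and ?R = "\<lambda>x. T x - m *\<^sub>C x"
  have R: "clinear ?R" using clinear_shift[OF T] .
  have comm: "?S (?R y) = ?R (?S y)" for y
  proof -
    have 1: "?S (?R y) = T (T y) - m *\<^sub>C T y - (n *\<^sub>C T y - (n * m) *\<^sub>C y)"
      by (simp only: clinear_diff[OF T] clinear_scale[OF T] cv.scale_right_diff_distrib scaleC_scaleC)
    have 2: "?R (?S y) = T (T y) - n *\<^sub>C T y - (m *\<^sub>C T y - (m * n) *\<^sub>C y)"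
      by (simp only: clinear_diff[OF T] clinear_scale[OF T] cv.scale_right_diff_distrib scaleC_scaleC)
    show ?thesis unfolding 1 2 by (simp add: mult.commute diff_diff_eq diff_diff_eq2 add.commute add.left_commute)
  qed
  obtain k where k: "(?S ^^ k) x = 0" using x unfolding gen_eig_def by blast
  have "(?S ^^ k) (?R x) = ?R ((?S ^^ k) x)" by (rule funpow_commute) (rule comm)
  also have "\<dots> = 0" using k clinear_zero[OF R] by simp
  finally show ?thesis unfolding gen_eig_def by blast
qed

lemma gen_eig_shift_pow_invariant:
  assumes T: "clinear T" and x: "x \<in> gen_eig T n"
  shows "((\<lambda>x. T x - m *\<^sub>C x) ^^ k) x \<in> gen_eig T n"
proof (induction k)
  case 0 then show ?case using x by simp
next
  case (Suc k)
  then show ?case using gen_eig_shift_invariant[OF T Suc] by simp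
qed

lemma gen_eig_shift_inj:
  assumes T: "clinear T" and x: "x \<in> gen_eig T n" and ne: "n \<noteq> m"
    and z: "T x - m *\<^sub>C x = 0"
  shows "x = 0"
proof -
  let ?S = "\<lambda>x. T x - n *\<^sub>C x"
  have Tx: "T x = m *\<^sub>C x" using z by simp
  have Sx: "?S x = (m - n) *\<^sub>C x" by (simp only: Tx cv.scale_left_diff_distrib)
  have pow: "(?S ^^ k) x = (m - n) ^ k *\<^sub>C x" for k
  proof (induction k)
    case 0 then show ?case by simp
  next
    case (Suc k)
    have "(?S ^^ Suc k) x = ?S ((m - n) ^ k *\<^sub>C x)" using Suc by simp
    also have "\<dots> = (m - n) ^ k *\<^sub>C ?S x"
      by (simp only: clinear_scale[OF clinear_shift[OF T]])
    also have "\<dots> = (m - n) ^ Suc k *\<^sub>C x"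
      by (simp only: Sx scaleC_scaleC power_Suc mult.commute)
    finally show ?case .
  qed
  obtain k where "(?S ^^ k) x = 0" using x unfolding gen_eig_def by blast
  then have "(m - n) ^ k *\<^sub>C x = 0" using pow by simp
  then show ?thesis using ne by (simp add: cv.scale_eq_0_iff)
qed

lemma gen_eig_shift_pow_inj:
  assumes T: "clinear T" and x: "x \<in> gen_eig T n" and ne: "n \<noteq> m"
    and z: "((\<lambda>x. T x - m *\<^sub>C x) ^^ k) x = 0"
  shows "x = 0"
  using x z
proof (induction k arbitrary: x)
  case 0 then show ?case by simp
next
  case (Suc k)
  have "((\<lambda>x. T x - m *\<^sub>C x) ^^ Suc k) x = ((\<lambda>x. T x - m *\<^sub>C x) ^^ k) (T x - m *\<^sub>C x)"
    by (simp only: funpow_Suc_right comp_apply)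
  then have "((\<lambda>x. T x - m *\<^sub>C x) ^^ k) (T x - m *\<^sub>C x) = 0" using Suc(3) by simp
  then have "T x - m *\<^sub>C x = 0" using Suc(1) gen_eig_shift_invariant[OF T Suc(2)] by blast
  then show ?case using gen_eig_shift_inj[OF T Suc(2) ne] by blast
qed

lemma gen_eig_zero: "clinear T \<Longrightarrow> 0 \<in> gen_eig T n"
  using gen_eig_subspace cv.subspace_0 by blast

lemma gen_eig_independent:
  assumes T: "clinear T" and "finite J" and "\<And>j. z j \<in> gen_eig T j" and "sum z J = 0"
  shows "\<forall>j\<in>J. z j = 0"
  using assms(2-4)
proof (induction J arbitrary: z rule: finite_induct)
  case empty then show ?case by simp
next
  case (insert m J)
  let ?R = "\<lambda>x. T x - m *\<^sub>C x"
  \<comment> \<open>a power of \<open>T - m\<close> kills \<open>z m\<close> and is injective on the other generalized eigenspaces\<close>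
  obtain k where k: "(?R ^^ k) (z m) = 0" using insert(4)[of m] unfolding gen_eig_def by blast
  have RK: "clinear (?R ^^ k)" using clinear_funpow[OF clinear_shift[OF T]] .
  have "(?R ^^ k) (sum z (insert m J)) = 0" using insert(5) clinear_zero[OF RK] by simp
  moreover have "(?R ^^ k) (sum z (insert m J)) = (?R ^^ k) (z m) + sum (\<lambda>j. (?R ^^ k) (z j)) J"
    using insert(1,2) by (subst clinear_sum[OF RK]) simp
  ultimately have s0: "sum (\<lambda>j. (?R ^^ k) (z j)) J = 0" using k by simp
  define z' where "z' = (\<lambda>j. if j = m then 0 else (?R ^^ k) (z j))"
  have "sum z' J = sum (\<lambda>j. (?R ^^ k) (z j)) J"
    unfolding z'_def using insert(2) by (intro sum.cong) auto
  then have "sum z' J = 0" using s0 by simp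
  moreover have "z' j \<in> gen_eig T j" for j
    unfolding z'_def using gen_eig_zero[OF T] gen_eig_shift_pow_invariant[OF T insert(4)] by simp
  ultimately have z'0: "\<forall>j\<in>J. z' j = 0" using insert(3) by blast
  have zJ: "\<forall>j\<in>J. z j = 0"
  proof
    fix j assume j: "j \<in> J"
    then have "j \<noteq> m" using insert(2) by blast
    then have "(?R ^^ k) (z j) = 0" using bspec[OF z'0 j] unfolding z'_def by (simp split: if_splits)
    then show "z j = 0" using gen_eig_shift_pow_inj[OF T insert(4) \<open>j \<noteq> m\<close>] by blast
  qed
  then have "sum z J = 0" by simp
  then have "z m = 0" using insert(1,2,5) by simp
  then show ?case using zJ by simp
qed

lemma indep_subspaces_gen_eig:
  assumes T: "clinear T" and E: "\<And>i. E i \<subseteq> gen_eig T (\<phi> i)" "\<And>i. cv.subspace (E i)" and inj: "inj \<phi>"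
  shows "indep_subspaces E"
proof
  show "cv.subspace (E i)" for i by (rule E(2))
next
  fix z J assume J: "finite J" and z: "\<And>j. z j \<in> E j" and s: "sum z J = 0"
  define z' where "z' = (\<lambda>n. if n \<in> \<phi> ` J then z (inv \<phi> n) else 0)"
  have injJ: "inj_on \<phi> J" by (meson inj inj_on_subset subset_UNIV)
  have "sum z' (\<phi> ` J) = sum (z' \<circ> \<phi>) J" by (rule sum.reindex[OF injJ])
  also have "\<dots> = sum z J" unfolding z'_def comp_def by (intro sum.cong) (auto simp: inv_f_f[OF inj])
  finally have "sum z' (\<phi> ` J) = 0" using s by simp
  moreover have "z' n \<in> gen_eig T n" for n
  proof (cases "n \<in> \<phi> ` J")
    case True
    then obtain j where j: "n = \<phi> j" by blast
    then have "z' n = z j" unfolding z'_def using True by (simp add: inv_f_f[OF inj])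
    then show ?thesis using z[of j] E(1)[of j] j by auto
  next
    case False
    then show ?thesis unfolding z'_def using gen_eig_zero[OF T] by simp
  qed
  ultimately have "\<forall>n\<in>\<phi> ` J. z' n = 0" using gen_eig_independent[OF T] J by blast
  then show "\<forall>j\<in>J. z j = 0" unfolding z'_def by (auto simp: inv_f_f[OF inj])
qed

section \<open>Vertex operator algebras and generalized modules\<close>

lemma gbinomial_one_left: "((1 :: complex) gchoose i) = (if i = 0 \<or> i = 1 then 1 else 0)"
proof -
  have "((1 :: complex) gchoose i) = of_nat (1 choose i)"
    using binomial_gbinomial[of 1 i, where 'a=complex] by simp
  then show ?thesis by (cases i) (auto simp: binomial_eq_0)
qed

lemma gbinomial_minus_two_left: "(-1) ^ i * ((of_int (-2) :: complex) gchoose i) = of_nat i + 1"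
proof -
  have "((of_int (-2) :: complex) gchoose i) = (-1) ^ i * ((of_nat i + 1) gchoose i)"
    by (subst gbinomial_negated_upper) simp
  also have "((of_nat i + 1 :: complex) gchoose i) = of_nat (Suc i choose i)"
    using binomial_gbinomial[of "Suc i" i, where 'a=complex] by (simp add: add.commute)
  finally show ?thesis by (simp add: power_mult_distrib[symmetric] mult.assoc[symmetric])
qed

locale voa =
  fixes Y :: "'v::cvs \<Rightarrow> int \<Rightarrow> 'v \<Rightarrow> 'v" and vac om :: 'v and c :: complex
  assumes VOA: "VOA Y vac om c"
begin

lemma Y_clinear: "clinear (Y v m)" "clinear (\<lambda>v. Y v m w)"
  using VOA unfolding VOA_def bilinear_op_def by simp_all

lemma vacuum_creation: "Y v (-1) vac = v"
  using VOA unfolding VOA_def by simp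

lemma virasoro: "Y om (m + 1) (Y om (n + 1) v) - Y om (n + 1) (Y om (m + 1) v)
    = of_int (m - n) *\<^sub>C Y om (m + n + 1) v
      + (if m + n = 0 then (of_int (m ^ 3 - m) / 12 * c) *\<^sub>C v else 0)"
  using VOA unfolding VOA_def by simp

lemma L_minus1_derivative: "Y (Y om 0 u) m w = (- of_int m) *\<^sub>C Y u (m - 1) w"
  using VOA unfolding VOA_def by simp

lemma Vgr_spanning: "v \<in> cspan (\<Union>n. Vgr Y om n)"
  using VOA unfolding VOA_def by simp

lemma Vgr_lower_bounded: "\<exists>K. \<forall>n<K. Vgr Y om n = {0}"
  using VOA unfolding VOA_def by simp

lemma L_minus1_eq_vac_mode: "Y om 0 u = Y u (-2) vac"
  using L_minus1_derivative[of u "-1" vac] by (simp add: vacuum_creation)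

lemma Vgr_subspace: "cv.subspace (Vgr Y om n)"
  unfolding cv.subspace_def Vgr_def
  by (simp add: clinear_zero[OF Y_clinear(1)] clinear_add[OF Y_clinear(1)] clinear_scale[OF Y_clinear(1)]
      scaleC_add_right scaleC_scaleC mult.commute)

sublocale V: direct_sum "Vgr Y om"
proof -
  interpret indep_subspaces "Vgr Y om"
    by (rule indep_subspaces_gen_eig[OF Y_clinear(1) _ Vgr_subspace, where \<phi> = "of_int :: int \<Rightarrow> complex"])
      (auto simp: Vgr_def gen_eig_def inj_on_def intro: exI[of _ 1])
  show "direct_sum (Vgr Y om)" by unfold_locales (rule Vgr_spanning)
qed

lemma L1_lowers_weight:
  assumes "v \<in> Vgr Y om h"
  shows "Y om 2 v \<in> Vgr Y om (h - 1)"
proof -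
  have "Y om 1 (Y om 2 v) - of_int h *\<^sub>C Y om 2 v = - Y om 2 v"
    using virasoro[of 0 1 v] assms clinear_scale[OF Y_clinear(1)] unfolding Vgr_def by simp
  then have "Y om 1 (Y om 2 v) = of_int h *\<^sub>C Y om 2 v - Y om 2 v"
    by (metis diff_add_cancel diff_conv_add_uminus add.commute)
  then show ?thesis unfolding Vgr_def by (simp add: cv.scale_left_diff_distrib)
qed

lemma L1_pow_lowers_weight: "v \<in> Vgr Y om h \<Longrightarrow> (Y om 2 ^^ j) v \<in> Vgr Y om (h - int j)"
  by (induction j) (auto dest: L1_lowers_weight simp: algebra_simps)

lemma L1_pow_zero: "(Y om 2 ^^ j) 0 = 0"
  using clinear_zero[OF clinear_funpow[OF Y_clinear(1)]] .

lemma L1_locally_nilpotent: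
  assumes "v \<in> Vgr Y om h"
  shows "\<exists>J. \<forall>j\<ge>J. (Y om 2 ^^ j) v = 0"
proof -
  obtain K where K: "\<forall>n<K. Vgr Y om n = {0}" using Vgr_lower_bounded by blast
  have "(Y om 2 ^^ j) v = 0" if "j \<ge> nat (h - K + 1)" for j
    using L1_pow_lowers_weight[OF assms, of j] K that by force
  then show ?thesis by blast
qed

lemma opp_ser_finite_support: "\<exists>C. finite C \<and> (\<forall>e. e \<notin> C \<longrightarrow> opp_ser Y om v e = 0)"
proof -
  obtain H where H: "finite H" "\<forall>h. h \<notin> H \<longrightarrow> dproj (Vgr Y om) h v = 0"
    using V.dproj_finite_support by blast
  have "\<forall>h. \<exists>J. \<forall>j\<ge>J. (Y om 2 ^^ j) (dproj (Vgr Y om) h v) = 0"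
    using L1_locally_nilpotent[OF V.dproj_in] by blast
  then obtain J where J: "\<And>h j. j \<ge> J h \<Longrightarrow> (Y om 2 ^^ j) (dproj (Vgr Y om) h v) = 0"
    by metis
  define C where "C = (\<Union>h\<in>H. (\<lambda>j. int j - 2 * h) ` {..<J h})"
  have "opp_ser Y om v e = 0" if "e \<notin> C" for e
    unfolding opp_ser_def
  proof (rule fsum_zero')
    fix x :: "nat \<times> int"
    obtain j k where x: "x = (j, k)" by (cases x)
    have "(Y om 2 ^^ j) (dproj (Vgr Y om) k v) = 0" if "int j - 2 * k = e"
      using that \<open>e \<notin> C\<close> H(2) J[of k j] L1_pow_zero unfolding C_def by (cases "k \<in> H") force+
    then show "(case x of (j, k) \<Rightarrow> if int j - 2 * k = e
        then ((-1) powi k / of_nat (fact j)) *\<^sub>C (Y om 2 ^^ j) (dproj (Vgr Y om) k v) else 0) = 0"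
      unfolding x by simp
  qed
  moreover have "finite C" unfolding C_def using H(1) by auto
  ultimately show ?thesis by blast
qed

lemma opp_ser_homogeneous:
  assumes v: "v \<in> Vgr Y om h"
  shows "opp_ser Y om v b = (if b + 2 * h \<ge> 0
      then ((-1) powi h / of_nat (fact (nat (b + 2 * h)))) *\<^sub>C (Y om 2 ^^ nat (b + 2 * h)) v else 0)"
proof (cases "b + 2 * h \<ge> 0")
  case True
  show ?thesis unfolding opp_ser_def
    by (subst fsum_single[where x="(nat (b + 2 * h), h)"])
      (use True in \<open>auto simp: V.dproj_mem[OF v] L1_pow_zero split: if_splits\<close>)
next
  case False
  show ?thesis unfolding opp_ser_def
    by (subst fsum_zero') (use False in \<open>auto simp: V.dproj_mem[OF v] L1_pow_zero split: if_splits\<close>)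
qed

end

locale vmodule = voa Y vac om c for Y :: "'v::cvs \<Rightarrow> int \<Rightarrow> 'v \<Rightarrow> 'v" and vac om c +
  fixes YW :: "'v \<Rightarrow> int \<Rightarrow> 'w::cvs \<Rightarrow> 'w"
  assumes module: "gen_module Y vac om YW"
begin

lemma mode_clinear: "clinear (YW v m)" "clinear (\<lambda>v. YW v m w)"
  using module unfolding gen_module_def bilinear_op_def by simp_all

lemma mode_truncation: "\<exists>N. \<forall>m\<ge>N. YW v m w = 0"
  using module unfolding gen_module_def by simp

lemma vacuum_mode: "YW vac m w = (if m = -1 then w else 0)"
  using module unfolding gen_module_def by simp

lemma borcherds_identity:
  "fsum (\<lambda>i::nat. ((of_int m :: complex) gchoose i) *\<^sub>C YW (Y u (l + int i) v) (m + n - int i) w)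
   = fsum (\<lambda>i::nat. ((-1) ^ i * ((of_int l :: complex) gchoose i)) *\<^sub>C
        (YW u (l + m - int i) (YW v (n + int i) w)
         - ((-1) powi l) *\<^sub>C YW v (l + n - int i) (YW u (m + int i) w)))"
  using module unfolding gen_module_def borcherds_def by simp

lemma Wgr_spanning: "w \<in> cspan (\<Union>n. Wgr YW om n)"
  using module unfolding gen_module_def by simp

lemma Wgr_lower_truncated: "\<exists>K. \<forall>k::int. k < K \<longrightarrow> Wgr YW om (n + of_int k) = {0}"
  using module unfolding gen_module_def by simp

sublocale W: direct_sum "Wgr YW om"
proof -
  interpret indep_subspaces "Wgr YW om"
    by (rule indep_subspaces_gen_eig[OF mode_clinear(1), where \<phi> = id])
      (auto simp: Wgr_def gen_eig_subspace[OF mode_clinear(1)])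
  show "direct_sum (Wgr YW om)" by unfold_locales (rule Wgr_spanning)
qed

lemma mode_scale_left: "YW (a *\<^sub>C u) m w = a *\<^sub>C YW u m w"
  using clinear_scale[OF mode_clinear(2)] .

lemma mode_add_left: "YW (u + v) m w = YW u m w + YW v m w"
  using clinear_add[OF mode_clinear(2)] .

lemma mode_zero_left: "YW 0 m w = 0"
  using clinear_zero[OF mode_clinear(2)] .

lemma mode_sum_left: "YW (sum f A) m w = (\<Sum>a\<in>A. YW (f a) m w)"
  using clinear_sum[OF mode_clinear(2)] .

lemma mode_zero_right: "YW u m 0 = 0"
  using clinear_zero[OF mode_clinear(1)] .

lemma mode_L_minus1: "YW (Y om 0 u) n w = (- of_int n) *\<^sub>C YW u (n - 1) w"
proof -
  have B: "fsum (\<lambda>i::nat. ((of_int 0 :: complex) gchoose i) *\<^sub>C YW (Y u (-2 + int i) vac) (0 + n - int i) w)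
   = fsum (\<lambda>i::nat. ((-1) ^ i * ((of_int (-2) :: complex) gchoose i)) *\<^sub>C
        (YW u (-2 + 0 - int i) (YW vac (n + int i) w)
         - ((-1) powi (-2)) *\<^sub>C YW vac (-2 + n - int i) (YW u (0 + int i) w)))"
    by (rule borcherds_identity)
  have L: "fsum (\<lambda>i::nat. ((of_int 0 :: complex) gchoose i) *\<^sub>C YW (Y u (-2 + int i) vac) (0 + n - int i) w)
      = YW (Y u (-2) vac) n w"
    by (subst fsum_single[where x=0]) (auto simp: gbinomial_0_left)
  define g where "g = (\<lambda>i::nat. (of_nat i + 1 :: complex) *\<^sub>C
        ((if n + int i = -1 then YW u (-2 - int i) w else 0) - (if -2 + n - int i = -1 then YW u (int i) w else 0)))"
  have R: "fsum (\<lambda>i::nat. ((-1) ^ i * ((of_int (-2) :: complex) gchoose i)) *\<^sub>C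
        (YW u (-2 + 0 - int i) (YW vac (n + int i) w)
         - ((-1) powi (-2)) *\<^sub>C YW vac (-2 + n - int i) (YW u (0 + int i) w))) = fsum g"
  proof (rule fsum_cong)
    fix i :: nat
    have "((-1::complex) powi (-2)) = 1" by (simp add: power_int_def)
    then show "((-1) ^ i * ((of_int (-2) :: complex) gchoose i)) *\<^sub>C
        (YW u (-2 + 0 - int i) (YW vac (n + int i) w)
         - ((-1) powi (-2)) *\<^sub>C YW vac (-2 + n - int i) (YW u (0 + int i) w)) = g i"
      unfolding g_def gbinomial_minus_two_left by (simp add: vacuum_mode mode_zero_right)
  qed
  have G: "fsum g = (- of_int n) *\<^sub>C YW u (n - 1) w"
  proof (cases "n \<le> -1")
    case True
    have "fsum g = g (nat (-1 - n))"
      by (rule fsum_single) (use True in \<open>auto simp: g_def\<close>)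
    then show ?thesis using True unfolding g_def by (simp add: of_nat_nat algebra_simps)
  next
    case False
    show ?thesis
    proof (cases "n = 0")
      case True
      then show ?thesis by (simp add: g_def fsum_zero')
    next
      case n0: False
      then have n1: "n \<ge> 1" using False by simp
      have "fsum g = g (nat (n - 1))"
        by (rule fsum_single) (use n1 in \<open>auto simp: g_def\<close>)
      then show ?thesis using n1 unfolding g_def by (simp add: of_nat_nat algebra_simps cv.scale_minus_left)
    qed
  qed
  show ?thesis using B L R G by (simp add: L_minus1_eq_vac_mode)
qed

lemma L0_mode_commutator:
  "YW om 1 (YW u m w) - YW u m (YW om 1 w) = YW (Y om 0 u) (m + 1) w + YW (Y om 1 u) m w"
proof -
  have B: "fsum (\<lambda>i::nat. ((of_int 1 :: complex) gchoose i) *\<^sub>C YW (Y om (0 + int i) u) (1 + m - int i) w)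
   = fsum (\<lambda>i::nat. ((-1) ^ i * ((of_int 0 :: complex) gchoose i)) *\<^sub>C
        (YW om (0 + 1 - int i) (YW u (m + int i) w)
         - ((-1) powi 0) *\<^sub>C YW u (0 + m - int i) (YW om (1 + int i) w)))"
    by (rule borcherds_identity)
  have "fsum (\<lambda>i::nat. ((of_int 1 :: complex) gchoose i) *\<^sub>C YW (Y om (0 + int i) u) (1 + m - int i) w)
       = (\<Sum>i\<in>{0,1}. ((of_int 1 :: complex) gchoose i) *\<^sub>C YW (Y om (0 + int i) u) (1 + m - int i) w)"
    by (rule fsum_eq_sum) (auto simp: gbinomial_one_left)
  also have "\<dots> = YW (Y om 0 u) (m + 1) w + YW (Y om 1 u) m w"
    by (simp add: gbinomial_one_left add.commute)
  finally have L: "fsum (\<lambda>i::nat. ((of_int 1 :: complex) gchoose i) *\<^sub>C YW (Y om (0 + int i) u) (1 + m - int i) w)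
     = YW (Y om 0 u) (m + 1) w + YW (Y om 1 u) m w" .
  have R: "fsum (\<lambda>i::nat. ((-1) ^ i * ((of_int 0 :: complex) gchoose i)) *\<^sub>C
        (YW om (0 + 1 - int i) (YW u (m + int i) w)
         - ((-1) powi 0) *\<^sub>C YW u (0 + m - int i) (YW om (1 + int i) w)))
     = YW om 1 (YW u m w) - YW u m (YW om 1 w)"
    by (subst fsum_single[where x=0]) (auto simp: gbinomial_0_left)
  show ?thesis using B L R by simp
qed

lemma L0_mode_commutator_homogeneous:
  assumes "u \<in> Vgr Y om h"
  shows "YW om 1 (YW u m w) = YW u m (YW om 1 w) + of_int (h - m - 1) *\<^sub>C YW u m w"
proof -
  have h: "Y om 1 u = of_int h *\<^sub>C u" using assms unfolding Vgr_def by simp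
  have "YW om 1 (YW u m w) - YW u m (YW om 1 w)
      = (- of_int (m + 1)) *\<^sub>C YW u (m + 1 - 1) w + of_int h *\<^sub>C YW u m w"
    using L0_mode_commutator[of u m w] by (simp only: mode_L_minus1 h mode_scale_left)
  also have "\<dots> = of_int (h - m - 1) *\<^sub>C YW u m w"
    by (simp add: scaleC_add_left[symmetric] algebra_simps)
  finally show ?thesis by (simp add: algebra_simps)
qed

lemma mode_maps_Wgr:
  assumes u: "u \<in> Vgr Y om h" and w: "w \<in> Wgr YW om p"
  shows "YW u m w \<in> Wgr YW om (p + of_int (h - m - 1))"
proof -
  let ?q = "p + of_int (h - m - 1)"
  let ?Sp = "\<lambda>x. YW om 1 x - p *\<^sub>C x" and ?Sq = "\<lambda>x. YW om 1 x - ?q *\<^sub>C x"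
  have step: "?Sq (YW u m x) = YW u m (?Sp x)" for x
    using L0_mode_commutator_homogeneous[OF u]
    by (simp add: clinear_diff[OF mode_clinear(1)] clinear_scale[OF mode_clinear(1)] scaleC_add_left algebra_simps)
  have "(?Sq ^^ k) (YW u m x) = YW u m ((?Sp ^^ k) x)" for k x
  proof (induction k)
    case (Suc k)
    have "(?Sq ^^ Suc k) (YW u m x) = ?Sq ((?Sq ^^ k) (YW u m x))" by simp
    also have "\<dots> = YW u m (?Sp ((?Sp ^^ k) x))" by (simp only: Suc step)
    finally show ?case by simp
  qed simp
  moreover obtain k where "(?Sp ^^ k) w = 0" using w unfolding Wgr_def gen_eig_def by blast
  ultimately have "(?Sq ^^ k) (YW u m w) = 0" by (simp add: mode_zero_right)
  then show ?thesis unfolding Wgr_def gen_eig_def by blast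
qed

end

section \<open>The completion and the contragredient module\<close>

definition gdual_support :: "('v \<Rightarrow> int \<Rightarrow> 'w::cvs \<Rightarrow> 'w) \<Rightarrow> 'v \<Rightarrow> ('w \<Rightarrow> complex) \<Rightarrow> complex set" where
  "gdual_support YW om \<alpha> = {n. \<exists>w\<in>Wgr YW om n. \<alpha> w \<noteq> 0}"

lemma exists_clinear_eq_1:
  assumes "(x::'w::cvs) \<noteq> 0"
  shows "\<exists>\<beta>. clinear \<beta> \<and> \<beta> x = (1::complex)"
proof -
  interpret p: vector_space_pair "scaleC :: complex \<Rightarrow> 'w \<Rightarrow> 'w" "scaleC :: complex \<Rightarrow> complex \<Rightarrow> complex"
    by unfold_locales
  have "cv.independent {x}" using assms by simp
  from p.linear_independent_extend[OF this, of "\<lambda>_. 1"]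
  obtain g :: "'w \<Rightarrow> complex" where g: "Vector_Spaces.linear scaleC scaleC g" "g x = 1" by auto
  then show ?thesis unfolding clinear_def Vector_Spaces.linear_iff by blast
qed

context vmodule
begin

lemma Wbar_lower_truncated: "\<exists>M. \<forall>f\<in>Wbar YW om. \<forall>m\<le>M. f (k0 + of_int m) = 0"
proof -
  obtain K where "\<forall>k::int. k < K \<longrightarrow> Wgr YW om (k0 + of_int k) = {0}"
    using Wgr_lower_truncated by blast
  then have "f (k0 + of_int m) = 0" if "m \<le> K - 1" "f \<in> Wbar YW om" for m f
    using that unfolding Wbar_def by force
  then show ?thesis by blast
qed

lemma bar_mode_eq_sum:
  assumes f: "f \<in> Wbar YW om" and H: "finite H" "\<forall>h. h \<notin> H \<longrightarrow> dproj (Vgr Y om) h u = 0"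
  shows "bar_mode YW om u m f k = (\<Sum>h\<in>H. YW (dproj (Vgr Y om) h u) m (f (k - of_int (h - m - 1))))"
proof -
  let ?u = "\<lambda>h. dproj (Vgr Y om) h u"
  have component: "dproj (Wgr YW om) k (YW (?u h) m (f p)) =
      (if p = k - of_int (h - m - 1) then YW (?u h) m (f p) else 0)" for h p
  proof -
    have "YW (?u h) m (f p) \<in> Wgr YW om (p + of_int (h - m - 1))"
      by (rule mode_maps_Wgr) (use f V.dproj_in in \<open>auto simp: Wbar_def\<close>)
    then show ?thesis by (auto simp: W.dproj_mem algebra_simps)
  qed
  have "dproj (Wgr YW om) k (YW u m (f p)) =
      (\<Sum>h\<in>H. if p = k - of_int (h - m - 1) then YW (?u h) m (f p) else 0)" for p
    by (subst V.sum_dproj[OF H]) (simp add: mode_sum_left clinear_sum[OF W.dproj_clinear] component)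
  then have "bar_mode YW om u m f k
      = fsum (\<lambda>p. \<Sum>h\<in>H. if p = k - of_int (h - m - 1) then YW (?u h) m (f p) else 0)"
    unfolding bar_mode_def by simp
  also have "\<dots> = (\<Sum>h\<in>H. fsum (\<lambda>p. if p = k - of_int (h - m - 1) then YW (?u h) m (f p) else 0))"
  proof (rule fsum_sum[OF H(1)])
    fix h show "fsupp (\<lambda>p. if p = k - of_int (h - m - 1) then YW (?u h) m (f p) else 0)"
      by (rule fsuppI[of "{k - of_int (h - m - 1)}"]) auto
  qed
  also have "\<dots> = (\<Sum>h\<in>H. YW (?u h) m (f (k - of_int (h - m - 1))))"
    by (rule sum.cong[OF refl], subst fsum_single[where x="k - of_int (_ - m - 1)"]) auto
  finally show ?thesis .
qed

lemma bar_mode_Wbar: "bar_mode YW om u m f \<in> Wbar YW om"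
  unfolding Wbar_def bar_mode_def by (auto intro!: W.fsum_in W.dproj_in)

lemma bar_mode_lower_truncated: "\<exists>M. \<forall>f\<in>Wbar YW om. \<forall>m\<le>M. bar_mode YW om u m f k = 0"
proof -
  obtain H where H: "finite H" "\<forall>h. h \<notin> H \<longrightarrow> dproj (Vgr Y om) h u = 0"
    using V.dproj_finite_support by blast
  have "\<exists>M. \<forall>h\<in>H. \<forall>m\<le>M. \<forall>f\<in>Wbar YW om. f ((k - of_int (h - 1)) + of_int m) = 0"
    by (rule uniform_bound_below_finite[OF H(1)]) (use Wbar_lower_truncated in blast)
  then obtain M where M: "\<And>h m f. h \<in> H \<Longrightarrow> m \<le> M \<Longrightarrow> f \<in> Wbar YW om \<Longrightarrow> f ((k - of_int (h - 1)) + of_int m) = 0"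
    by blast
  have "bar_mode YW om u m f k = 0" if "m \<le> M" "f \<in> Wbar YW om" for m f
  proof -
    have "YW (dproj (Vgr Y om) h u) m (f (k - of_int (h - m - 1))) = 0" if "h \<in> H" for h
    proof -
      have "k - of_int (h - m - 1) = (k - of_int (h - 1)) + of_int m" by simp
      then show ?thesis using M[OF \<open>h \<in> H\<close> \<open>m \<le> M\<close> \<open>f \<in> Wbar YW om\<close>] by (metis mode_zero_right)
    qed
    then show ?thesis using bar_mode_eq_sum[OF that(2) H] by simp
  qed
  then show ?thesis by blast
qed

lemma bar_mode_scale: "bar_mode YW om (a *\<^sub>C u) m f k = a *\<^sub>C bar_mode YW om u m f k"
  unfolding bar_mode_def by (simp add: mode_scale_left W.dproj_scale fsum_scaleC)

lemma bar_mode_add: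
  assumes f: "f \<in> Wbar YW om"
  shows "bar_mode YW om (u + v) m f k = bar_mode YW om u m f k + bar_mode YW om v m f k"
proof -
  obtain H1 where H1: "finite H1" "\<forall>h. h \<notin> H1 \<longrightarrow> dproj (Vgr Y om) h u = 0"
    using V.dproj_finite_support by blast
  obtain H2 where H2: "finite H2" "\<forall>h. h \<notin> H2 \<longrightarrow> dproj (Vgr Y om) h v = 0"
    using V.dproj_finite_support by blast
  have H: "finite (H1 \<union> H2)" "\<forall>h. h \<notin> H1 \<union> H2 \<longrightarrow> dproj (Vgr Y om) h u = 0"
    "\<forall>h. h \<notin> H1 \<union> H2 \<longrightarrow> dproj (Vgr Y om) h v = 0"
    "\<forall>h. h \<notin> H1 \<union> H2 \<longrightarrow> dproj (Vgr Y om) h (u + v) = 0"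
    using H1 H2 by (auto simp: V.dproj_add)
  show ?thesis
    by (simp add: bar_mode_eq_sum[OF f H(1,2)] bar_mode_eq_sum[OF f H(1,3)] bar_mode_eq_sum[OF f H(1,4)]
        V.dproj_add mode_add_left sum.distrib)
qed

lemma bar_mode_zero: "bar_mode YW om 0 m f = (\<lambda>_. 0)"
  using bar_mode_scale[of 0 0 m f] by auto

lemma WbarD: "f \<in> Wbar YW om \<Longrightarrow> f n \<in> Wgr YW om n"
  unfolding Wbar_def by blast

lemma Wbar_diff: "f \<in> Wbar YW om \<Longrightarrow> g \<in> Wbar YW om \<Longrightarrow> (\<lambda>n. f n - g n) \<in> Wbar YW om"
  unfolding Wbar_def by (auto intro: W.diff_in)

lemma Wbar_zero: "(\<lambda>n. 0) \<in> Wbar YW om"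
  unfolding Wbar_def by simp

lemma bar_mult_Wbar: "(\<And>s. g s \<in> Wbar YW om) \<Longrightarrow> bar_mult d g t \<in> Wbar YW om"
  unfolding Wbar_def bar_mult_def ser_mult_def by (auto intro!: W.fsum_in W.scale_in)

lemma gdualD:
  assumes "\<alpha> \<in> gdual YW om"
  shows "clinear \<alpha>" "finite (gdual_support YW om \<alpha>)"
    "\<And>x n. x \<in> Wgr YW om n \<Longrightarrow> n \<notin> gdual_support YW om \<alpha> \<Longrightarrow> \<alpha> x = 0"
  using assms unfolding gdual_def gdual_support_def by auto

lemma pair_eq_sum:
  assumes a: "\<alpha> \<in> gdual YW om" and f: "f \<in> Wbar YW om"
  shows "pair \<alpha> f = (\<Sum>n\<in>gdual_support YW om \<alpha>. \<alpha> (f n))"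
  unfolding pair_def
  by (rule fsum_eq_sum[OF gdualD(2)[OF a]]) (rule gdualD(3)[OF a WbarD[OF f]])

lemma pair_diff:
  assumes a: "\<alpha> \<in> gdual YW om" and f: "f \<in> Wbar YW om" and g: "g \<in> Wbar YW om"
  shows "pair \<alpha> (\<lambda>n. f n - g n) = pair \<alpha> f - pair \<alpha> g"
  by (simp add: pair_eq_sum[OF a] Wbar_diff[OF f g] f g clinear_diff[OF gdualD(1)[OF a]] sum_subtractf)

lemma pair_scale:
  assumes a: "\<alpha> \<in> gdual YW om" and f: "f \<in> Wbar YW om"
  shows "pair \<alpha> (\<lambda>n. r *\<^sub>C f n) = r * pair \<alpha> f"
proof -
  have "(\<lambda>n. r *\<^sub>C f n) \<in> Wbar YW om" using f unfolding Wbar_def by (auto intro: W.scale_in)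
  then show ?thesis
    by (simp add: pair_eq_sum[OF a] f clinear_scale[OF gdualD(1)[OF a]] sum_distrib_left)
qed

lemma pair_zero: "\<alpha> \<in> gdual YW om \<Longrightarrow> pair \<alpha> (\<lambda>n. 0) = 0"
  unfolding pair_def by (simp add: clinear_zero[OF gdualD(1)])

lemma pair_bar_mult:
  assumes a: "\<alpha> \<in> gdual YW om" and g: "\<And>s. g s \<in> Wbar YW om"
    and supp: "\<And>k. fsupp (\<lambda>s. d s *\<^sub>C g (fst t - fst s, snd t - snd s) k)"
  shows "pair \<alpha> (bar_mult d g t) = ser_mult d (\<lambda>s. pair \<alpha> (g s)) t"
proof -
  let ?S = "gdual_support YW om \<alpha>"
  have lin: "clinear \<alpha>" using gdualD(1)[OF a] .
  have "pair \<alpha> (bar_mult d g t) = (\<Sum>k\<in>?S. \<alpha> (bar_mult d g t k))"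
    by (rule pair_eq_sum[OF a bar_mult_Wbar[OF g]])
  also have "\<dots> = (\<Sum>k\<in>?S. fsum (\<lambda>s. d s * \<alpha> (g (fst t - fst s, snd t - snd s) k)))"
    unfolding bar_mult_def ser_mult_def
    by (rule sum.cong[OF refl], subst fsum_clinear[OF lin supp]) (simp add: clinear_scale[OF lin])
  also have "\<dots> = fsum (\<lambda>s. \<Sum>k\<in>?S. d s * \<alpha> (g (fst t - fst s, snd t - snd s) k))"
    using fsupp_clinear[OF lin supp]
    by (intro fsum_sum[symmetric] gdualD(2)[OF a]) (simp add: clinear_scale[OF lin])
  also have "\<dots> = fsum (\<lambda>s. d s *\<^sub>C pair \<alpha> (g (fst t - fst s, snd t - snd s)))"
    by (rule fsum_cong) (simp add: pair_eq_sum[OF a g] sum_distrib_left)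
  finally show ?thesis unfolding ser_mult_def .
qed

lemma Wbar_eq_0_if_pair_eq_0:
  assumes f: "f \<in> Wbar YW om" and p: "\<And>\<alpha>. \<alpha> \<in> gdual YW om \<Longrightarrow> pair \<alpha> f = 0"
  shows "f k = 0"
proof (rule ccontr)
  assume "f k \<noteq> 0"
  then obtain \<beta> :: "'w \<Rightarrow> complex" where \<beta>: "clinear \<beta>" "\<beta> (f k) = 1"
    using exists_clinear_eq_1 by blast
  define \<alpha> where "\<alpha> = (\<lambda>w. \<beta> (dproj (Wgr YW om) k w))"
  have vanish: "\<alpha> w = 0" if "w \<in> Wgr YW om n" "n \<noteq> k" for w n
    unfolding \<alpha>_def using W.dproj_mem[OF that(1), of k] that(2) clinear_zero[OF \<beta>(1)] by simp
  then have "{n. \<exists>w\<in>Wgr YW om n. \<alpha> w \<noteq> 0} \<subseteq> {k}" by blast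
  moreover have "clinear \<alpha>" unfolding \<alpha>_def by (rule clinear_comp[OF \<beta>(1) W.dproj_clinear])
  ultimately have "\<alpha> \<in> gdual YW om" unfolding gdual_def using finite_subset by blast
  moreover have "pair \<alpha> f = \<alpha> (f k)"
    unfolding pair_def by (rule fsum_single) (use vanish WbarD[OF f] in blast)
  moreover have "\<alpha> (f k) = 1" unfolding \<alpha>_def using W.dproj_mem[OF WbarD[OF f], of k] \<beta>(2) by simp
  ultimately show False using p by simp
qed

end

section \<open>Formal delta functions\<close>

text \<open>The delta functions \<open>x\<^sub>0\<^sup>-\<^sup>1\<delta>((x\<^sub>1-z)/x\<^sub>0)\<close>, \<open>z\<^sup>-\<^sup>1\<delta>((x\<^sub>1-x\<^sub>0)/z)\<close> and \<open>x\<^sub>0\<^sup>-\<^sup>1\<delta>((z-x\<^sub>1)/(-x\<^sub>0))\<close>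
  of the Jacobi identity, and their variants with \<open>x\<^sub>1\<^sup>-\<^sup>1\<close> in place of \<open>x\<^sub>1\<close>.\<close>

abbreviation "delta_lhs z \<equiv> delta_ser (invm x0m) x1m (negm (cm z)) x0m"
abbreviation "delta_rhs1 z \<equiv> delta_ser (invm (cm z)) x1m (negm x0m) (cm z)"
abbreviation "delta_rhs2 z \<equiv> delta_ser (invm x0m) (cm z) (negm x1m) (negm x0m)"
abbreviation "delta_lhs_x1inv z \<equiv> delta_ser (invm x0m) x1invm (negm (cm z)) x0m"
abbreviation "delta_rhs1_x1inv z \<equiv> delta_ser (invm (cm z)) x1invm (negm x0m) (cm z)"
abbreviation "delta_rhs2_x1inv z \<equiv> delta_ser (invm x0m) (cm z) (negm x1invm) (negm x0m)"

lemmas mono_defs = x0m_def x1m_def x1invm_def cm_def negm_def invm_def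

lemma delta_ser_nonzero_exponents:
  assumes "delta_ser P A B D t \<noteq> 0"
  shows "\<exists>n i. fst (snd P) - n * fst (snd D) + (n - int i) * fst (snd A) + int i * fst (snd B) = fst t
      \<and> snd (snd P) - n * snd (snd D) + (n - int i) * snd (snd A) + int i * snd (snd B) = snd t"
proof -
  obtain x where "(case x of (n::int, i::nat) \<Rightarrow>
     if fst (snd P) - n * fst (snd D) + (n - int i) * fst (snd A) + int i * fst (snd B) = fst t
      \<and> snd (snd P) - n * snd (snd D) + (n - int i) * snd (snd A) + int i * snd (snd B) = snd t
     then fst P * (fst D) powi (-n) * ((of_int n :: complex) gchoose i) * (fst A) powi (n - int i) * (fst B) ^ i
     else 0) \<noteq> 0"
    using fsum_nonzero[OF assms[unfolded delta_ser_def]] by blast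
  then show ?thesis by (cases x) (auto split: if_splits)
qed

lemma delta_lhs_support: "delta_lhs z s \<noteq> 0 \<Longrightarrow> fst s + snd s \<le> -1"
  by (drule delta_ser_nonzero_exponents) (auto simp: mono_defs)

lemma delta_rhs1_support: "delta_rhs1 z s \<noteq> 0 \<Longrightarrow> fst s \<ge> 0"
  by (drule delta_ser_nonzero_exponents) (auto simp: mono_defs)

lemma delta_rhs2_support: "delta_rhs2 z s \<noteq> 0 \<Longrightarrow> snd s \<ge> 0"
  by (drule delta_ser_nonzero_exponents) (auto simp: mono_defs)

lemma delta_rhs2_residue: "delta_rhs2 z (-1, q) = (if q = 0 then 1 else 0)"
proof (cases "q = 0")
  case True
  show ?thesis unfolding delta_ser_def
    by (subst fsum_single[where x="(0::int, 0::nat)"]) (auto simp: mono_defs True split: if_splits)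
next
  case False
  show ?thesis unfolding delta_ser_def
    by (subst fsum_zero') (auto simp: mono_defs False gbinomial_0_left)
qed

lemma delta_ser_reflect_snd:
  "delta_ser (a, (p0, - p1)) (b, (q0, - q1)) (c, (r0, - r1)) (d, (s0, - s1)) (t0, t1)
   = delta_ser (a, (p0, p1)) (b, (q0, q1)) (c, (r0, r1)) (d, (s0, s1)) (t0, - t1)"
proof -
  have "(- p1 - n * - s1 + (n - int i) * - q1 + int i * - r1 = t1) \<longleftrightarrow>
        (p1 - n * s1 + (n - int i) * q1 + int i * r1 = - t1)" for n i
    by (simp add: algebra_simps) linarith
  then show ?thesis unfolding delta_ser_def by (intro fsum_cong) (simp split: prod.split)
qed

lemma delta_lhs_x1inv: "delta_lhs_x1inv z s = delta_lhs z (fst s, - snd s)"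
  using delta_ser_reflect_snd[of 1 "-1" 0 1 0 1 "-z" 0 0 1 1 0 "fst s" "snd s"] by (simp add: mono_defs)

lemma delta_rhs1_x1inv: "delta_rhs1_x1inv z s = delta_rhs1 z (fst s, - snd s)"
  using delta_ser_reflect_snd[of "inverse z" 0 0 1 0 1 "-1" 1 0 z 0 0 "fst s" "snd s"] by (simp add: mono_defs)

lemma delta_rhs2_x1inv: "delta_rhs2_x1inv z s = delta_rhs2 z (fst s, - snd s)"
  using delta_ser_reflect_snd[of 1 "-1" 0 z 0 0 "-1" 0 1 "-1" 1 0 "fst s" "snd s"] by (simp add: mono_defs)

lemma bar_mult_scale_coeffs:
  assumes "\<And>s. g' s k = a *\<^sub>C g s k"
  shows "bar_mult d g' t k = a *\<^sub>C bar_mult d g t k"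
  unfolding bar_mult_def ser_mult_def assms by (simp only: scaleC_left_commute fsum_scaleC)

lemma bar_mult_add_coeffs:
  assumes "\<And>s. g s k = g1 s k + g2 s k"
    and "fsupp (\<lambda>s. d s *\<^sub>C g1 (fst t - fst s, snd t - snd s) k)"
    and "fsupp (\<lambda>s. d s *\<^sub>C g2 (fst t - fst s, snd t - snd s) k)"
  shows "bar_mult d g t k = bar_mult d g1 t k + bar_mult d g2 t k"
  using fsum_add[OF assms(2,3)] unfolding bar_mult_def ser_mult_def by (simp add: assms(1) scaleC_add_right)

section \<open>The Jacobi defect of a quasi-intertwining map\<close>

locale quasi_intw_setting =
  M1: vmodule Y vac om c Y1 + M2: vmodule Y vac om c Y2 + M3: vmodule Y vac om c Y3
  for Y :: "'v::cvs \<Rightarrow> int \<Rightarrow> 'v \<Rightarrow> 'v" and vac om c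
  and Y1 :: "'v \<Rightarrow> int \<Rightarrow> 'a::cvs \<Rightarrow> 'a" and Y2 :: "'v \<Rightarrow> int \<Rightarrow> 'b::cvs \<Rightarrow> 'b"
  and Y3 :: "'v \<Rightarrow> int \<Rightarrow> 'c::cvs \<Rightarrow> 'c" +
  fixes z :: complex and F :: "'a \<Rightarrow> 'b \<Rightarrow> complex \<Rightarrow> 'c"
  assumes quasi: "quasi_intw om z Y1 Y2 Y3 F"
begin

lemma F_Wbar: "F w1 w2 \<in> Wbar Y3 om"
  using quasi unfolding quasi_intw_def bar_map_def by blast

lemma F_clinear1: "clinear (\<lambda>w1. F w1 w2 k)"
  using quasi unfolding quasi_intw_def bar_map_def by blast

lemma F_clinear2: "clinear (\<lambda>w2. F w1 w2 k)"
  using quasi unfolding quasi_intw_def bar_map_def by blast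

lemma F_zero1: "F 0 w2 k = 0" using clinear_zero[OF F_clinear1] .
lemma F_zero2: "F w1 0 k = 0" using clinear_zero[OF F_clinear2] .
lemma F_scale1: "F (a *\<^sub>C x) w2 k = a *\<^sub>C F x w2 k" using clinear_scale[OF F_clinear1] .
lemma F_scale2: "F w1 (a *\<^sub>C x) k = a *\<^sub>C F w1 x k" using clinear_scale[OF F_clinear2] .
lemma F_add1: "F (x + y) w2 k = F x w2 k + F y w2 k" using clinear_add[OF F_clinear1] .
lemma F_add2: "F w1 (x + y) k = F w1 x k + F w1 y k" using clinear_add[OF F_clinear2] .

lemma quasi_intw_identity:
  "(\<lambda>n. bar_mode Y3 om v (-k-1) (F w1 w2) n - F w1 (Y2 v (-k-1) w2) n)
     = bar_mult (delta_rhs1 z) (\<lambda>(a,b). if b = 0 then F (Y1 v (-a-1) w1) w2 else (\<lambda>_. 0)) (-1, k)"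
  using quasi unfolding quasi_intw_def by blast

definition Y3_F_ser where "Y3_F_ser u w1 w2 = (\<lambda>(a,b). if a = 0 then bar_mode Y3 om u (-b-1) (F w1 w2) else (\<lambda>_. 0))"
definition F_Y1_ser where "F_Y1_ser u w1 w2 = (\<lambda>(a,b). if b = 0 then F (Y1 u (-a-1) w1) w2 else (\<lambda>_. 0))"
definition F_Y2_ser where "F_Y2_ser u w1 w2 = (\<lambda>(a,b). if a = 0 then F w1 (Y2 u (-b-1) w2) else (\<lambda>_. 0))"

definition jac_lhs where "jac_lhs u w1 w2 t = bar_mult (delta_lhs z) (Y3_F_ser u w1 w2) t"
definition jac_rhs1 where "jac_rhs1 u w1 w2 t = bar_mult (delta_rhs1 z) (F_Y1_ser u w1 w2) t"
definition jac_rhs2 where "jac_rhs2 u w1 w2 t = bar_mult (delta_rhs2 z) (F_Y2_ser u w1 w2) t"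
definition jac_defect where "jac_defect u w1 w2 t = (\<lambda>k. jac_lhs u w1 w2 t k - jac_rhs1 u w1 w2 t k - jac_rhs2 u w1 w2 t k)"

lemma Y3_F_ser_Wbar: "Y3_F_ser u w1 w2 s \<in> Wbar Y3 om"
  unfolding Y3_F_ser_def by (cases s) (auto intro: M3.bar_mode_Wbar M3.Wbar_zero)
lemma F_Y1_ser_Wbar: "F_Y1_ser u w1 w2 s \<in> Wbar Y3 om"
  unfolding F_Y1_ser_def by (cases s) (auto intro: F_Wbar M3.Wbar_zero)
lemma F_Y2_ser_Wbar: "F_Y2_ser u w1 w2 s \<in> Wbar Y3 om"
  unfolding F_Y2_ser_def by (cases s) (auto intro: F_Wbar M3.Wbar_zero)

lemma jac_lhs_Wbar: "jac_lhs u w1 w2 t \<in> Wbar Y3 om"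
  unfolding jac_lhs_def by (rule M3.bar_mult_Wbar[OF Y3_F_ser_Wbar])
lemma jac_rhs1_Wbar: "jac_rhs1 u w1 w2 t \<in> Wbar Y3 om"
  unfolding jac_rhs1_def by (rule M3.bar_mult_Wbar[OF F_Y1_ser_Wbar])
lemma jac_rhs2_Wbar: "jac_rhs2 u w1 w2 t \<in> Wbar Y3 om"
  unfolding jac_rhs2_def by (rule M3.bar_mult_Wbar[OF F_Y2_ser_Wbar])
lemma jac_defect_Wbar: "jac_defect u w1 w2 t \<in> Wbar Y3 om"
  unfolding jac_defect_def by (intro M3.Wbar_diff jac_lhs_Wbar jac_rhs1_Wbar jac_rhs2_Wbar)

lemma jac_lhs_summable: "fsupp (\<lambda>s. delta_lhs z s *\<^sub>C Y3_F_ser u w1 w2 (fst t - fst s, snd t - snd s) k)"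
proof -
  obtain M where M: "\<And>f m. f \<in> Wbar Y3 om \<Longrightarrow> m \<le> M \<Longrightarrow> bar_mode Y3 om u m f k = 0"
    using M3.bar_mode_lower_truncated[of u k] by blast
  show ?thesis
  proof (rule fsuppI[of "{fst t} \<times> {M + snd t .. - 1 - fst t}"])
    fix s :: "int \<times> int"
    assume s: "s \<notin> {fst t} \<times> {M + snd t .. - 1 - fst t}"
    show "delta_lhs z s *\<^sub>C Y3_F_ser u w1 w2 (fst t - fst s, snd t - snd s) k = 0"
    proof (cases "fst s = fst t \<and> delta_lhs z s \<noteq> 0")
      case True
      then have "fst s + snd s \<le> -1" using delta_lhs_support by blast
      moreover have "snd s \<notin> {M + snd t .. - 1 - fst t}" using s True by (cases s) auto
      ultimately have "snd s < M + snd t" using True by auto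
      then have "bar_mode Y3 om u (- (snd t - snd s) - 1) (F w1 w2) k = 0" using M[OF F_Wbar] by simp
      then show ?thesis using True unfolding Y3_F_ser_def by simp
    next
      case False
      then show ?thesis unfolding Y3_F_ser_def by auto
    qed
  qed simp
qed

lemma jac_rhs1_summable: "fsupp (\<lambda>s. delta_rhs1 z s *\<^sub>C F_Y1_ser u w1 w2 (fst t - fst s, snd t - snd s) k)"
proof -
  obtain N where N: "\<And>m. m \<ge> N \<Longrightarrow> Y1 u m w1 = 0" using M1.mode_truncation by blast
  show ?thesis
  proof (rule fsuppI[of "{0 .. N + fst t} \<times> {snd t}"])
    fix s :: "int \<times> int"
    assume s: "s \<notin> {0 .. N + fst t} \<times> {snd t}"
    show "delta_rhs1 z s *\<^sub>C F_Y1_ser u w1 w2 (fst t - fst s, snd t - snd s) k = 0"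
    proof (cases "snd s = snd t \<and> delta_rhs1 z s \<noteq> 0")
      case True
      then have "fst s \<ge> 0" using delta_rhs1_support by blast
      moreover have "fst s \<notin> {0 .. N + fst t}" using s True by (cases s) auto
      ultimately have "fst s > N + fst t" by auto
      then have "Y1 u (- (fst t - fst s) - 1) w1 = 0" using N by simp
      then show ?thesis using True unfolding F_Y1_ser_def by (simp add: F_zero1)
    next
      case False
      then show ?thesis unfolding F_Y1_ser_def by auto
    qed
  qed simp
qed

lemma jac_rhs2_summable: "fsupp (\<lambda>s. delta_rhs2 z s *\<^sub>C F_Y2_ser u w1 w2 (fst t - fst s, snd t - snd s) k)"
proof -
  obtain N where N: "\<And>m. m \<ge> N \<Longrightarrow> Y2 u m w2 = 0" using M2.mode_truncation by blast
  show ?thesis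
  proof (rule fsuppI[of "{fst t} \<times> {0 .. N + snd t}"])
    fix s :: "int \<times> int"
    assume s: "s \<notin> {fst t} \<times> {0 .. N + snd t}"
    show "delta_rhs2 z s *\<^sub>C F_Y2_ser u w1 w2 (fst t - fst s, snd t - snd s) k = 0"
    proof (cases "fst s = fst t \<and> delta_rhs2 z s \<noteq> 0")
      case True
      then have "snd s \<ge> 0" using delta_rhs2_support by blast
      moreover have "snd s \<notin> {0 .. N + snd t}" using s True by (cases s) auto
      ultimately have "snd s > N + snd t" by auto
      then have "Y2 u (- (snd t - snd s) - 1) w2 = 0" using N by simp
      then show ?thesis using True unfolding F_Y2_ser_def by (simp add: F_zero2)
    next
      case False
      then show ?thesis unfolding F_Y2_ser_def by auto
    qed
  qed simp
qed


lemma pair_jac_lhs: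
  assumes a: "\<alpha> \<in> gdual Y3 om"
  shows "pair \<alpha> (jac_lhs u w1 w2 t) = fsum (\<lambda>s. delta_lhs z s *
     (if fst t - fst s = 0 then pair \<alpha> (bar_mode Y3 om u (-(snd t - snd s) - 1) (F w1 w2)) else 0))"
  unfolding jac_lhs_def M3.pair_bar_mult[OF a Y3_F_ser_Wbar jac_lhs_summable] ser_mult_def
  by (rule fsum_cong) (simp add: Y3_F_ser_def M3.pair_zero[OF a])

lemma pair_jac_rhs1:
  assumes a: "\<alpha> \<in> gdual Y3 om"
  shows "pair \<alpha> (jac_rhs1 u w1 w2 t) = fsum (\<lambda>s. delta_rhs1 z s *
     (if snd t - snd s = 0 then pair \<alpha> (F (Y1 u (-(fst t - fst s) - 1) w1) w2) else 0))"
  unfolding jac_rhs1_def M3.pair_bar_mult[OF a F_Y1_ser_Wbar jac_rhs1_summable] ser_mult_def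
  by (rule fsum_cong) (simp add: F_Y1_ser_def M3.pair_zero[OF a])

lemma pair_jac_rhs2:
  assumes a: "\<alpha> \<in> gdual Y3 om"
  shows "pair \<alpha> (jac_rhs2 u w1 w2 t) = fsum (\<lambda>s. delta_rhs2 z s *
     (if fst t - fst s = 0 then pair \<alpha> (F w1 (Y2 u (-(snd t - snd s) - 1) w2)) else 0))"
  unfolding jac_rhs2_def M3.pair_bar_mult[OF a F_Y2_ser_Wbar jac_rhs2_summable] ser_mult_def
  by (rule fsum_cong) (simp add: F_Y2_ser_def M3.pair_zero[OF a])

lemma jac_lhs_scale: "jac_lhs (a *\<^sub>C u) w1 w2 t k = a *\<^sub>C jac_lhs u w1 w2 t k"
  unfolding jac_lhs_def
  by (rule bar_mult_scale_coeffs) (auto simp: Y3_F_ser_def M3.bar_mode_scale split: prod.split)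

lemma jac_rhs1_scale: "jac_rhs1 (a *\<^sub>C u) w1 w2 t k = a *\<^sub>C jac_rhs1 u w1 w2 t k"
  unfolding jac_rhs1_def
  by (rule bar_mult_scale_coeffs) (auto simp: F_Y1_ser_def M1.mode_scale_left F_scale1 split: prod.split)

lemma jac_rhs2_scale: "jac_rhs2 (a *\<^sub>C u) w1 w2 t k = a *\<^sub>C jac_rhs2 u w1 w2 t k"
  unfolding jac_rhs2_def
  by (rule bar_mult_scale_coeffs) (auto simp: F_Y2_ser_def M2.mode_scale_left F_scale2 split: prod.split)

lemma jac_lhs_add: "jac_lhs (u + v) w1 w2 t k = jac_lhs u w1 w2 t k + jac_lhs v w1 w2 t k"
  unfolding jac_lhs_def
  by (rule bar_mult_add_coeffs[OF _ jac_lhs_summable jac_lhs_summable])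
    (auto simp: Y3_F_ser_def M3.bar_mode_add[OF F_Wbar] split: prod.split)

lemma jac_rhs1_add: "jac_rhs1 (u + v) w1 w2 t k = jac_rhs1 u w1 w2 t k + jac_rhs1 v w1 w2 t k"
  unfolding jac_rhs1_def
  by (rule bar_mult_add_coeffs[OF _ jac_rhs1_summable jac_rhs1_summable])
    (auto simp: F_Y1_ser_def M1.mode_add_left F_add1 split: prod.split)

lemma jac_rhs2_add: "jac_rhs2 (u + v) w1 w2 t k = jac_rhs2 u w1 w2 t k + jac_rhs2 v w1 w2 t k"
  unfolding jac_rhs2_def
  by (rule bar_mult_add_coeffs[OF _ jac_rhs2_summable jac_rhs2_summable])
    (auto simp: F_Y2_ser_def M2.mode_add_left F_add2 split: prod.split)

lemma jac_lhs_zero: "jac_lhs 0 w1 w2 t = (\<lambda>_. 0)"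
  using jac_lhs_scale[of 0 0 w1 w2 t] by auto

lemma jac_rhs1_zero: "jac_rhs1 0 w1 w2 t = (\<lambda>_. 0)"
  using jac_rhs1_scale[of 0 0 w1 w2 t] by auto

lemma jac_rhs2_zero: "jac_rhs2 0 w1 w2 t = (\<lambda>_. 0)"
  using jac_rhs2_scale[of 0 0 w1 w2 t] by auto

lemma jac_defect_scale: "jac_defect (a *\<^sub>C u) w1 w2 t = (\<lambda>k. a *\<^sub>C jac_defect u w1 w2 t k)"
  unfolding jac_defect_def by (simp add: jac_lhs_scale jac_rhs1_scale jac_rhs2_scale cv.scale_right_diff_distrib)

lemma jac_defect_zero: "jac_defect 0 w1 w2 t = (\<lambda>_. 0)"
  using jac_defect_scale[of 0 0 w1 w2 t] by auto

lemma jac_defect_sum: "jac_defect (sum f H) w1 w2 t k = (\<Sum>h\<in>H. jac_defect (f h) w1 w2 t k)"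
proof (induction H rule: infinite_finite_induct)
  case (insert h H)
  then show ?case by (simp add: jac_defect_def jac_lhs_add jac_rhs1_add jac_rhs2_add algebra_simps)
qed (simp_all add: jac_defect_zero)

section \<open>The action of \<open>\<tau>\<^sub>P\<^sub>(\<^sub>z\<^sub>)\<close> on \<open>F\<^sup>\<or>(W\<^sub>3\<^sup>\<prime>)\<close>\<close>

definition Fvee where "Fvee \<alpha> = (\<lambda>w1 w2. pair \<alpha> (F w1 w2))"

lemma F_zero1_fun: "F 0 w2 = (\<lambda>_. 0)" using F_zero1 by auto
lemma F_zero2_fun: "F w1 0 = (\<lambda>_. 0)" using F_zero2 by auto

lemma Fvee_zero1: "\<alpha> \<in> gdual Y3 om \<Longrightarrow> Fvee \<alpha> 0 w2 = 0"
  unfolding Fvee_def F_zero1_fun by (rule M3.pair_zero)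
lemma Fvee_zero2: "\<alpha> \<in> gdual Y3 om \<Longrightarrow> Fvee \<alpha> w1 0 = 0"
  unfolding Fvee_def F_zero2_fun by (rule M3.pair_zero)

lemma pair_bar_mode_lower_truncated:
  assumes a: "\<alpha> \<in> gdual Y3 om"
  shows "\<exists>M. \<forall>f\<in>Wbar Y3 om. \<forall>m\<le>M. pair \<alpha> (bar_mode Y3 om u m f) = 0"
proof -
  let ?S = "gdual_support Y3 om \<alpha>"
  have "\<exists>M. \<forall>k\<in>?S. \<forall>m\<le>M. \<forall>f\<in>Wbar Y3 om. bar_mode Y3 om u m f k = 0"
    by (rule uniform_bound_below_finite[OF M3.gdualD(2)[OF a]]) (use M3.bar_mode_lower_truncated in blast)
  then obtain M where M: "\<And>k m f. k \<in> ?S \<Longrightarrow> m \<le> M \<Longrightarrow> f \<in> Wbar Y3 om \<Longrightarrow> bar_mode Y3 om u m f k = 0"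
    by blast
  have "pair \<alpha> (bar_mode Y3 om u m f) = 0" if "m \<le> M" "f \<in> Wbar Y3 om" for m f
    using M that clinear_zero[OF M3.gdualD(1)[OF a]]
    by (simp add: M3.pair_eq_sum[OF a M3.bar_mode_Wbar])
  then show ?thesis by blast
qed

lemma pair_quasi_intw_identity:
  assumes a: "\<alpha> \<in> gdual Y3 om"
  shows "pair \<alpha> (bar_mode Y3 om u (-k-1) (F w1 w2)) - Fvee \<alpha> w1 (Y2 u (-k-1) w2) = pair \<alpha> (jac_rhs1 u w1 w2 (-1, k))"
proof -
  have "pair \<alpha> (\<lambda>n. bar_mode Y3 om u (-k-1) (F w1 w2) n - F w1 (Y2 u (-k-1) w2) n)
      = pair \<alpha> (bar_mode Y3 om u (-k-1) (F w1 w2)) - pair \<alpha> (F w1 (Y2 u (-k-1) w2))"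
    by (rule M3.pair_diff[OF a M3.bar_mode_Wbar F_Wbar])
  moreover have "(\<lambda>n. bar_mode Y3 om u (-k-1) (F w1 w2) n - F w1 (Y2 u (-k-1) w2) n) = jac_rhs1 u w1 w2 (-1, k)"
    unfolding jac_rhs1_def F_Y1_ser_def by (rule quasi_intw_identity)
  ultimately show ?thesis unfolding Fvee_def by simp
qed

definition tau_delta_Y1 where "tau_delta_Y1 v \<alpha> T w1 w2 = ser_mult (delta_rhs1_x1inv z) (\<lambda>(a,b). Fvee \<alpha> (Y1 (opp_ser Y om v b) (-a-1) w1) w2) T"
definition tau_delta_Y2 where "tau_delta_Y2 v \<alpha> T w1 w2 = ser_mult (delta_rhs2_x1inv z)
  (\<lambda>(a,b). if a = 0 then fsum (\<lambda>e. Fvee \<alpha> w1 (Y2 (opp_ser Y om v e) (b - e - 1) w2)) else 0) T"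

lemma tau_delta_eq: "tau_delta Y om z Y1 Y2 v (Fvee \<alpha>) T w1 w2 = tau_delta_Y1 v \<alpha> T w1 w2 + tau_delta_Y2 v \<alpha> T w1 w2"
  unfolding tau_delta_def tau_delta_Y1_def tau_delta_Y2_def ..

lemma tau_delta_Y1_eq:
  assumes a: "\<alpha> \<in> gdual Y3 om"
  shows "tau_delta_Y1 v \<alpha> T w1 w2 = fsum (\<lambda>e. pair \<alpha> (jac_rhs1 (opp_ser Y om v e) w1 w2 (fst T, e - snd T)))"
proof -
  obtain C where C: "finite C" "\<And>e. e \<notin> C \<Longrightarrow> opp_ser Y om v e = 0" using M1.opp_ser_finite_support by blast
  have "\<exists>N. \<forall>e\<in>C. \<forall>m\<ge>N. Y1 (opp_ser Y om v e) m w1 = 0"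
    by (rule uniform_bound_above_finite[OF C(1)]) (rule M1.mode_truncation)
  then obtain N where N: "\<And>e m. e \<in> C \<Longrightarrow> m \<ge> N \<Longrightarrow> Y1 (opp_ser Y om v e) m w1 = 0" by blast
  define f where "f = (\<lambda>e s. delta_rhs1 z s * (if (e - snd T) - snd s = 0
      then Fvee \<alpha> (Y1 (opp_ser Y om v e) (-(fst T - fst s) - 1) w1) w2 else 0))"
  have R: "pair \<alpha> (jac_rhs1 (opp_ser Y om v e) w1 w2 (fst T, e - snd T)) = fsum (f e)" for e
    unfolding pair_jac_rhs1[OF a] f_def Fvee_def by (simp cong: if_cong)
  have fz: "f e s = 0" if "e \<notin> C \<or> s \<notin> {0 .. N + fst T} \<times> ((\<lambda>e. e - snd T) ` C)" for e s
  proof (cases "e \<in> C \<and> (e - snd T) - snd s = 0 \<and> delta_rhs1 z s \<noteq> 0")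
    case True
    then have s0: "fst s \<ge> 0" using delta_rhs1_support by blast
    have "snd s \<in> (\<lambda>e. e - snd T) ` C" using True by force
    then have "fst s \<notin> {0 .. N + fst T}" using that True by (cases s) auto
    then have "-(fst T - fst s) - 1 \<ge> N" using s0 by auto
    then show ?thesis unfolding f_def using N True Fvee_zero1[OF a] by simp
  next
    case False
    then show ?thesis unfolding f_def using that C(2) Fvee_zero1[OF a] M1.mode_zero_left by auto
  qed
  have "fsum (\<lambda>e. fsum (f e)) = fsum (\<lambda>s. fsum (\<lambda>e. f e s))"
    by (rule fsum_swap[OF C(1), of "{0 .. N + fst T} \<times> ((\<lambda>e. e - snd T) ` C)"]) (use C(1) fz in auto)
  also have "\<dots> = fsum (\<lambda>s. delta_rhs1 z s * Fvee \<alpha> (Y1 (opp_ser Y om v (snd T + snd s)) (-(fst T - fst s) - 1) w1) w2)"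
    by (rule fsum_cong, subst fsum_single[where x="snd T + snd _"]) (auto simp: f_def)
  also have "\<dots> = fsum (\<lambda>s. delta_rhs1 z (fst s, - snd s) * Fvee \<alpha> (Y1 (opp_ser Y om v (snd T - snd s)) (-(fst T - fst s) - 1) w1) w2)"
    by (subst fsum_reflect_snd) simp
  also have "\<dots> = tau_delta_Y1 v \<alpha> T w1 w2"
    unfolding tau_delta_Y1_def ser_mult_def by (rule fsum_cong) (simp add: delta_rhs1_x1inv case_prod_beta)
  finally show ?thesis using R by simp
qed

lemma tau_delta_Y2_residue:
  "tau_delta_Y2 v \<alpha> (-1, B) w1 w2 = fsum (\<lambda>e. Fvee \<alpha> w1 (Y2 (opp_ser Y om v e) (B - e - 1) w2))"
  unfolding tau_delta_Y2_def ser_mult_def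
proof (subst fsum_single[where x="(-1, 0)"])
  fix s :: "int \<times> int" assume s: "s \<noteq> (-1, 0)"
  show "delta_rhs2_x1inv z s *\<^sub>C (case (fst (-1, B) - fst s, snd (-1, B) - snd s) of
          (a, b) \<Rightarrow> if a = 0 then fsum (\<lambda>e. Fvee \<alpha> w1 (Y2 (opp_ser Y om v e) (b - e - 1) w2)) else 0) = 0"
  proof (cases "fst s = -1")
    case True
    then have "snd s \<noteq> 0" using s by (cases s) auto
    then have "delta_rhs2_x1inv z s = 0" using True by (simp add: delta_rhs2_x1inv delta_rhs2_residue)
    then show ?thesis by simp
  next
    case False
    then show ?thesis by simp
  qed
next
  show "delta_rhs2_x1inv z (-1, 0) *\<^sub>C (case (fst (-1::int, B) - fst (-1::int, 0::int), snd (-1, B) - snd (-1::int, 0::int)) of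
          (a, b) \<Rightarrow> if a = 0 then fsum (\<lambda>e. Fvee \<alpha> w1 (Y2 (opp_ser Y om v e) (b - e - 1) w2)) else 0) =
        fsum (\<lambda>e. Fvee \<alpha> w1 (Y2 (opp_ser Y om v e) (B - e - 1) w2))"
    by (simp add: delta_rhs2_x1inv delta_rhs2_residue)
qed

lemma tau_Y_Fvee:
  assumes a: "\<alpha> \<in> gdual Y3 om"
  shows "tau_Y Y om z Y1 Y2 v (Fvee \<alpha>) B w1 w2 = fsum (\<lambda>e. pair \<alpha> (bar_mode Y3 om (opp_ser Y om v e) (B - e - 1) (F w1 w2)))"
proof -
  obtain C where C: "finite C" "\<And>e. e \<notin> C \<Longrightarrow> opp_ser Y om v e = 0" using M1.opp_ser_finite_support by blast
  have q: "pair \<alpha> (jac_rhs1 (opp_ser Y om v e) w1 w2 (-1, e - B)) =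
      pair \<alpha> (bar_mode Y3 om (opp_ser Y om v e) (B - e - 1) (F w1 w2)) - Fvee \<alpha> w1 (Y2 (opp_ser Y om v e) (B - e - 1) w2)" for e
    using pair_quasi_intw_identity[OF a, of "opp_ser Y om v e" "e - B" w1 w2] by simp
  have "tau_Y Y om z Y1 Y2 v (Fvee \<alpha>) B w1 w2 = tau_delta_Y1 v \<alpha> (-1, B) w1 w2 + tau_delta_Y2 v \<alpha> (-1, B) w1 w2"
    unfolding tau_Y_def tau_delta_eq ..
  also have "\<dots> = fsum (\<lambda>e. pair \<alpha> (jac_rhs1 (opp_ser Y om v e) w1 w2 (-1, e - B))) + fsum (\<lambda>e. Fvee \<alpha> w1 (Y2 (opp_ser Y om v e) (B - e - 1) w2))"
    by (simp add: tau_delta_Y1_eq[OF a] tau_delta_Y2_residue)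
  also have "\<dots> = (\<Sum>e\<in>C. pair \<alpha> (jac_rhs1 (opp_ser Y om v e) w1 w2 (-1, e - B))) + (\<Sum>e\<in>C. Fvee \<alpha> w1 (Y2 (opp_ser Y om v e) (B - e - 1) w2))"
  proof -
    have 1: "fsum (\<lambda>e. pair \<alpha> (jac_rhs1 (opp_ser Y om v e) w1 w2 (-1, e - B))) = (\<Sum>e\<in>C. pair \<alpha> (jac_rhs1 (opp_ser Y om v e) w1 w2 (-1, e - B)))"
      by (rule fsum_eq_sum[OF C(1)]) (simp add: C(2) jac_rhs1_zero M3.pair_zero[OF a])
    have 2: "fsum (\<lambda>e. Fvee \<alpha> w1 (Y2 (opp_ser Y om v e) (B - e - 1) w2)) = (\<Sum>e\<in>C. Fvee \<alpha> w1 (Y2 (opp_ser Y om v e) (B - e - 1) w2))"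
      by (rule fsum_eq_sum[OF C(1)]) (simp add: C(2) M2.mode_zero_left Fvee_zero2[OF a])
    show ?thesis unfolding 1 2 ..
  qed
  also have "\<dots> = (\<Sum>e\<in>C. pair \<alpha> (bar_mode Y3 om (opp_ser Y om v e) (B - e - 1) (F w1 w2)))"
    by (simp add: q sum.distrib[symmetric])
  also have "\<dots> = fsum (\<lambda>e. pair \<alpha> (bar_mode Y3 om (opp_ser Y om v e) (B - e - 1) (F w1 w2)))"
    by (rule fsum_eq_sum[symmetric, OF C(1)]) (simp add: C(2) M3.bar_mode_zero M3.pair_zero[OF a])
  finally show ?thesis .
qed

lemma tau_Y_Fvee_lower_truncated:
  assumes a: "\<alpha> \<in> gdual Y3 om"
  shows "\<exists>B0. \<forall>b\<le>B0. \<forall>w1 w2. fsum (\<lambda>e. pair \<alpha> (bar_mode Y3 om (opp_ser Y om v e) (b - e - 1) (F w1 w2))) = 0"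
proof -
  obtain C where C: "finite C" "\<And>e. e \<notin> C \<Longrightarrow> opp_ser Y om v e = 0" using M1.opp_ser_finite_support by blast
  have "\<exists>M. \<forall>e\<in>C. \<forall>m\<le>M. \<forall>f\<in>Wbar Y3 om. pair \<alpha> (bar_mode Y3 om (opp_ser Y om v e) m f) = 0"
    by (rule uniform_bound_below_finite[OF C(1)]) (use pair_bar_mode_lower_truncated[OF a] in blast)
  then obtain M where M: "\<And>e m f. e \<in> C \<Longrightarrow> m \<le> M \<Longrightarrow> f \<in> Wbar Y3 om \<Longrightarrow> pair \<alpha> (bar_mode Y3 om (opp_ser Y om v e) m f) = 0"
    by blast
  define e0 where "e0 = Min (insert 0 C)"
  have e0: "e \<in> C \<Longrightarrow> e0 \<le> e" for e unfolding e0_def using C(1) by (intro Min_le) auto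
  have "fsum (\<lambda>e. pair \<alpha> (bar_mode Y3 om (opp_ser Y om v e) (b - e - 1) (F w1 w2))) = 0" if "b \<le> M + 1 + e0" for b w1 w2
  proof (rule fsum_zero')
    fix e
    show "pair \<alpha> (bar_mode Y3 om (opp_ser Y om v e) (b - e - 1) (F w1 w2)) = 0"
    proof (cases "e \<in> C")
      case True
      then show ?thesis using M[OF True _ F_Wbar] e0[OF True] that by simp
    next
      case False
      then show ?thesis using C(2) M3.bar_mode_zero M3.pair_zero[OF a] by simp
    qed
  qed
  then show ?thesis by blast
qed

lemma tau_delta_Y2_eq:
  assumes a: "\<alpha> \<in> gdual Y3 om"
  shows "tau_delta_Y2 v \<alpha> T w1 w2 = fsum (\<lambda>e. pair \<alpha> (jac_rhs2 (opp_ser Y om v e) w1 w2 (fst T, e - snd T)))"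
proof -
  obtain C where C: "finite C" "\<And>e. e \<notin> C \<Longrightarrow> opp_ser Y om v e = 0" using M1.opp_ser_finite_support by blast
  have "\<exists>N. \<forall>e\<in>C. \<forall>m\<ge>N. Y2 (opp_ser Y om v e) m w2 = 0"
    by (rule uniform_bound_above_finite[OF C(1)]) (rule M2.mode_truncation)
  then obtain N where N: "\<And>e m. e \<in> C \<Longrightarrow> m \<ge> N \<Longrightarrow> Y2 (opp_ser Y om v e) m w2 = 0" by blast
  define e1 where "e1 = Max (insert 0 C)"
  have e1: "e \<in> C \<Longrightarrow> e \<le> e1" for e unfolding e1_def using C(1) by (intro Max_ge) auto
  define f where "f = (\<lambda>e s. delta_rhs2 z s * (if fst T - fst s = 0
      then Fvee \<alpha> w1 (Y2 (opp_ser Y om v e) (-((e - snd T) - snd s) - 1) w2) else 0))"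
  have R: "pair \<alpha> (jac_rhs2 (opp_ser Y om v e) w1 w2 (fst T, e - snd T)) = fsum (f e)" for e
    unfolding pair_jac_rhs2[OF a] f_def Fvee_def by (simp cong: if_cong)
  let ?B = "{fst T} \<times> {0 .. N - snd T + e1 + 1}"
  have fz: "f e s = 0" if "e \<notin> C \<or> s \<notin> ?B" for e s
  proof (cases "e \<in> C \<and> fst T - fst s = 0 \<and> delta_rhs2 z s \<noteq> 0")
    case True
    then have s1: "snd s \<ge> 0" using delta_rhs2_support by blast
    have "snd s \<notin> {0 .. N - snd T + e1 + 1}" using that True by (cases s) auto
    then have "snd s > N - snd T + e1 + 1" using s1 by auto
    then have "-((e - snd T) - snd s) - 1 \<ge> N" using e1[of e] True by auto
    then show ?thesis unfolding f_def using N True Fvee_zero2[OF a] by simp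
  next
    case False
    then show ?thesis unfolding f_def using that C(2) Fvee_zero2[OF a] M2.mode_zero_left by auto
  qed
  have "fsum (\<lambda>e. fsum (f e)) = fsum (\<lambda>s. fsum (\<lambda>e. f e s))"
    by (rule fsum_swap[OF C(1), of ?B]) (use fz in auto)
  also have "\<dots> = fsum (\<lambda>s. delta_rhs2 z s * (if fst T - fst s = 0
      then fsum (\<lambda>e. Fvee \<alpha> w1 (Y2 (opp_ser Y om v e) (snd T + snd s - e - 1) w2)) else 0))"
    unfolding f_def by (rule fsum_cong) (simp add: fsum_mult_if[symmetric] algebra_simps cong: if_cong)
  also have "\<dots> = fsum (\<lambda>s. delta_rhs2 z (fst s, - snd s) * (if fst T - fst s = 0
      then fsum (\<lambda>e. Fvee \<alpha> w1 (Y2 (opp_ser Y om v e) (snd T - snd s - e - 1) w2)) else 0))"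
    by (subst fsum_reflect_snd) (simp cong: if_cong)
  also have "\<dots> = tau_delta_Y2 v \<alpha> T w1 w2"
    unfolding tau_delta_Y2_def ser_mult_def by (rule fsum_cong) (simp add: delta_rhs2_x1inv case_prod_beta)
  finally show ?thesis using R by simp
qed

lemma compat_rhs_Fvee_eq:
  assumes a: "\<alpha> \<in> gdual Y3 om"
  shows "ser_mult (delta_lhs_x1inv z) (\<lambda>(a,b). if a = 0 then tau_Y Y om z Y1 Y2 v (Fvee \<alpha>) b w1 w2 else 0) T
     = fsum (\<lambda>e. pair \<alpha> (jac_lhs (opp_ser Y om v e) w1 w2 (fst T, e - snd T)))"
proof -
  obtain C where C: "finite C" "\<And>e. e \<notin> C \<Longrightarrow> opp_ser Y om v e = 0" using M1.opp_ser_finite_support by blast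
  have "\<exists>M. \<forall>e\<in>C. \<forall>m\<le>M. \<forall>f\<in>Wbar Y3 om. pair \<alpha> (bar_mode Y3 om (opp_ser Y om v e) m f) = 0"
    by (rule uniform_bound_below_finite[OF C(1)]) (use pair_bar_mode_lower_truncated[OF a] in blast)
  then obtain M where M: "\<And>e m f. e \<in> C \<Longrightarrow> m \<le> M \<Longrightarrow> f \<in> Wbar Y3 om \<Longrightarrow> pair \<alpha> (bar_mode Y3 om (opp_ser Y om v e) m f) = 0"
    by blast
  define e0 where "e0 = Min (insert 0 C)"
  have e0: "e \<in> C \<Longrightarrow> e0 \<le> e" for e unfolding e0_def using C(1) by (intro Min_le) auto
  define f where "f = (\<lambda>e s. delta_lhs z s * (if fst T - fst s = 0
      then pair \<alpha> (bar_mode Y3 om (opp_ser Y om v e) (-((e - snd T) - snd s) - 1) (F w1 w2)) else 0))"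
  have R: "pair \<alpha> (jac_lhs (opp_ser Y om v e) w1 w2 (fst T, e - snd T)) = fsum (f e)" for e
    unfolding pair_jac_lhs[OF a] f_def by (simp cong: if_cong)
  let ?B = "{fst T} \<times> {M - snd T + e0 .. - 1 - fst T}"
  have fz: "f e s = 0" if "e \<notin> C \<or> s \<notin> ?B" for e s
  proof (cases "e \<in> C \<and> fst T - fst s = 0 \<and> delta_lhs z s \<noteq> 0")
    case True
    then have s1: "fst s + snd s \<le> -1" using delta_lhs_support by blast
    have "snd s \<notin> {M - snd T + e0 .. - 1 - fst T}" using that True by (cases s) auto
    then have "snd s < M - snd T + e0" using s1 True by auto
    then have "-((e - snd T) - snd s) - 1 \<le> M" using e0[of e] True by auto
    then show ?thesis unfolding f_def using M[OF _ _ F_Wbar] True by simp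
  next
    case False
    then show ?thesis unfolding f_def using that C(2) M3.bar_mode_zero M3.pair_zero[OF a] by auto
  qed
  have "fsum (\<lambda>e. fsum (f e)) = fsum (\<lambda>s. fsum (\<lambda>e. f e s))"
    by (rule fsum_swap[OF C(1), of ?B]) (use fz in auto)
  also have "\<dots> = fsum (\<lambda>s. delta_lhs z s * (if fst T - fst s = 0
      then fsum (\<lambda>e. pair \<alpha> (bar_mode Y3 om (opp_ser Y om v e) ((snd T + snd s) - e - 1) (F w1 w2))) else 0))"
    unfolding f_def by (rule fsum_cong) (simp add: fsum_mult_if[symmetric] algebra_simps cong: if_cong)
  also have "\<dots> = fsum (\<lambda>s. delta_lhs z s * (if fst T - fst s = 0
      then tau_Y Y om z Y1 Y2 v (Fvee \<alpha>) (snd T + snd s) w1 w2 else 0))"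
    by (simp add: tau_Y_Fvee[OF a] cong: if_cong)
  also have "\<dots> = fsum (\<lambda>s. delta_lhs z (fst s, - snd s) * (if fst T - fst s = 0
      then tau_Y Y om z Y1 Y2 v (Fvee \<alpha>) (snd T - snd s) w1 w2 else 0))"
    by (subst fsum_reflect_snd) (simp cong: if_cong)
  also have "\<dots> = ser_mult (delta_lhs_x1inv z) (\<lambda>(a,b). if a = 0 then tau_Y Y om z Y1 Y2 v (Fvee \<alpha>) b w1 w2 else 0) T"
    unfolding ser_mult_def by (rule fsum_cong) (simp add: delta_lhs_x1inv case_prod_beta)
  finally show ?thesis using R by simp
qed

lemma pair_jac_defect_opp_ser_sum:
  assumes a: "\<alpha> \<in> gdual Y3 om"
  shows "fsum (\<lambda>e. pair \<alpha> (jac_defect (opp_ser Y om v e) w1 w2 (fst T, e - snd T)))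
    = ser_mult (delta_lhs_x1inv z) (\<lambda>(a,b). if a = 0 then tau_Y Y om z Y1 Y2 v (Fvee \<alpha>) b w1 w2 else 0) T
      - tau_delta Y om z Y1 Y2 v (Fvee \<alpha>) T w1 w2"
proof -
  obtain C where C: "finite C" "\<And>e. e \<notin> C \<Longrightarrow> opp_ser Y om v e = 0" using M1.opp_ser_finite_support by blast
  have pj: "pair \<alpha> (jac_defect u w1 w2 t) = pair \<alpha> (jac_lhs u w1 w2 t) - pair \<alpha> (jac_rhs1 u w1 w2 t) - pair \<alpha> (jac_rhs2 u w1 w2 t)" for u t
  proof -
    have "pair \<alpha> (jac_defect u w1 w2 t) = pair \<alpha> (\<lambda>k. jac_lhs u w1 w2 t k - jac_rhs1 u w1 w2 t k) - pair \<alpha> (jac_rhs2 u w1 w2 t)"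
      unfolding jac_defect_def by (rule M3.pair_diff[OF a M3.Wbar_diff[OF jac_lhs_Wbar jac_rhs1_Wbar] jac_rhs2_Wbar])
    also have "pair \<alpha> (\<lambda>k. jac_lhs u w1 w2 t k - jac_rhs1 u w1 w2 t k) = pair \<alpha> (jac_lhs u w1 w2 t) - pair \<alpha> (jac_rhs1 u w1 w2 t)"
      by (rule M3.pair_diff[OF a jac_lhs_Wbar jac_rhs1_Wbar])
    finally show ?thesis .
  qed
  let ?L = "\<lambda>e. pair \<alpha> (jac_lhs (opp_ser Y om v e) w1 w2 (fst T, e - snd T))"
  let ?A = "\<lambda>e. pair \<alpha> (jac_rhs1 (opp_ser Y om v e) w1 w2 (fst T, e - snd T))"
  let ?B = "\<lambda>e. pair \<alpha> (jac_rhs2 (opp_ser Y om v e) w1 w2 (fst T, e - snd T))"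
  have zL: "fsum ?L = sum ?L C"
    by (rule fsum_eq_sum[OF C(1)]) (simp add: C(2) jac_lhs_zero M3.pair_zero[OF a])
  have zA: "fsum ?A = sum ?A C"
    by (rule fsum_eq_sum[OF C(1)]) (simp add: C(2) jac_rhs1_zero M3.pair_zero[OF a])
  have zB: "fsum ?B = sum ?B C"
    by (rule fsum_eq_sum[OF C(1)]) (simp add: C(2) jac_rhs2_zero M3.pair_zero[OF a])
  have zJ: "fsum (\<lambda>e. pair \<alpha> (jac_defect (opp_ser Y om v e) w1 w2 (fst T, e - snd T))) = sum (\<lambda>e. ?L e - ?A e - ?B e) C"
    by (subst fsum_eq_sum[OF C(1)]) (simp_all add: C(2) pj jac_lhs_zero jac_rhs1_zero jac_rhs2_zero M3.pair_zero[OF a])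
  have "sum (\<lambda>e. ?L e - ?A e - ?B e) C = sum ?L C - sum ?A C - sum ?B C"
    by (simp add: sum_subtractf)
  also have "\<dots> = ser_mult (delta_lhs_x1inv z) (\<lambda>(a,b). if a = 0 then tau_Y Y om z Y1 Y2 v (Fvee \<alpha>) b w1 w2 else 0) T
      - (tau_delta_Y1 v \<alpha> T w1 w2 + tau_delta_Y2 v \<alpha> T w1 w2)"
    by (simp add: tau_delta_Y1_eq[OF a] tau_delta_Y2_eq[OF a] compat_rhs_Fvee_eq[OF a] zL zA zB)
  finally show ?thesis using zJ by (simp add: tau_delta_eq)
qed

lemma tau_mode_Fvee_truncated:
  assumes a: "\<alpha> \<in> gdual Y3 om"
  shows "\<exists>N. \<forall>n\<ge>N. tau_mode Y om z Y1 Y2 v n (Fvee \<alpha>) = (\<lambda>_ _. 0)"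
proof -
  obtain B0 where B0: "\<And>b w1 w2. b \<le> B0 \<Longrightarrow> fsum (\<lambda>e. pair \<alpha> (bar_mode Y3 om (opp_ser Y om v e) (b - e - 1) (F w1 w2))) = 0"
    using tau_Y_Fvee_lower_truncated[OF a, of v] by blast
  have "tau_mode Y om z Y1 Y2 v n (Fvee \<alpha>) = (\<lambda>_ _. 0)" if "n \<ge> - B0 - 1" for n
  proof (intro ext)
    fix w1 w2
    show "tau_mode Y om z Y1 Y2 v n (Fvee \<alpha>) w1 w2 = 0"
      unfolding tau_mode_def tau_Y_Fvee[OF a] using B0[of "-n-1"] that by simp
  qed
  then show ?thesis by blast
qed

lemma Fdual_eq: "Fdual Y3 om F = {Fvee \<alpha> | \<alpha>. \<alpha> \<in> gdual Y3 om}"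
  unfolding Fdual_def Fvee_def ..

lemma P_intw_iff_jac_defect_zero:
  "P_intw om z Y1 Y2 Y3 F \<longleftrightarrow> (\<forall>u w1 w2 t. jac_defect u w1 w2 t = (\<lambda>_. 0))"
proof -
  have "P_intw om z Y1 Y2 Y3 F \<longleftrightarrow> (\<forall>u w1 w2 t k. jac_lhs u w1 w2 t k = jac_rhs1 u w1 w2 t k + jac_rhs2 u w1 w2 t k)"
    unfolding P_intw_def jac_lhs_def jac_rhs1_def jac_rhs2_def Y3_F_ser_def F_Y1_ser_def F_Y2_ser_def using quasi by simp
  also have "\<dots> \<longleftrightarrow> (\<forall>u w1 w2 t. jac_defect u w1 w2 t = (\<lambda>_. 0))"
    unfolding jac_defect_def fun_eq_iff by (simp add: diff_diff_eq eq_diff_eq[symmetric] diff_eq_eq)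
  finally show ?thesis .
qed

lemma P_compatible_Fvee_iff:
  assumes a: "\<alpha> \<in> gdual Y3 om"
  shows "P_compatible Y om z Y1 Y2 (Fvee \<alpha>) \<longleftrightarrow>
    (\<forall>v w1 w2 T. fsum (\<lambda>e. pair \<alpha> (jac_defect (opp_ser Y om v e) w1 w2 (fst T, e - snd T))) = 0)"
proof -
  have "tau_delta Y om z Y1 Y2 v (Fvee \<alpha>) T w1 w2 =
      ser_mult (delta_lhs_x1inv z) (\<lambda>(a, b). if a = 0 then tau_Y Y om z Y1 Y2 v (Fvee \<alpha>) b w1 w2 else 0) T
    \<longleftrightarrow> fsum (\<lambda>e. pair \<alpha> (jac_defect (opp_ser Y om v e) w1 w2 (fst T, e - snd T))) = 0" for v w1 w2 T
    unfolding pair_jac_defect_opp_ser_sum[OF a] by (metis right_minus_eq)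
  then show ?thesis unfolding P_compatible_def using tau_mode_Fvee_truncated[OF a] by blast
qed

lemma P_compatible_Fdual_if_jac_defect_zero:
  assumes "\<And>u w1 w2 t. jac_defect u w1 w2 t = (\<lambda>_. 0)"
  shows "P_compatible_set Y om z Y1 Y2 (Fdual Y3 om F)"
  unfolding P_compatible_set_def Fdual_eq
proof clarify
  fix \<alpha> assume a: "\<alpha> \<in> gdual Y3 om"
  then show "P_compatible Y om z Y1 Y2 (Fvee \<alpha>)"
    unfolding P_compatible_Fvee_iff[OF a] by (simp add: assms M3.pair_zero)
qed

lemma jac_defect_opp_ser_homogeneous:
  assumes u: "u \<in> Vgr Y om h"
    and lower: "\<And>j u' w1 w2 t. j \<ge> 1 \<Longrightarrow> u' \<in> Vgr Y om (h - int j) \<Longrightarrow> jac_defect u' w1 w2 t = (\<lambda>_. 0)"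
  shows "jac_defect (opp_ser Y om u e) w1 w2 t
    = (if e = - 2 * h then (\<lambda>k. (-1) powi h *\<^sub>C jac_defect u w1 w2 t k) else (\<lambda>_. 0))"
proof -
  consider "e = - 2 * h" | "e + 2 * h \<ge> 1" | "e + 2 * h < 0" by linarith
  then show ?thesis
  proof cases
    case 2
    have "(Y om 2 ^^ nat (e + 2 * h)) u \<in> Vgr Y om (h - int (nat (e + 2 * h)))"
      by (rule M1.L1_pow_lowers_weight[OF u])
    then show ?thesis
      using 2 lower[of "nat (e + 2 * h)"] by (simp add: M1.opp_ser_homogeneous[OF u] jac_defect_scale)
  qed (simp_all add: M1.opp_ser_homogeneous[OF u] jac_defect_scale jac_defect_zero)
qed

lemma jac_defect_zero_step:
  assumes comp: "P_compatible_set Y om z Y1 Y2 (Fdual Y3 om F)"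
    and u: "u \<in> Vgr Y om h"
    and lower: "\<And>j u' w1 w2 t. j \<ge> 1 \<Longrightarrow> u' \<in> Vgr Y om (h - int j) \<Longrightarrow> jac_defect u' w1 w2 t = (\<lambda>_. 0)"
  shows "jac_defect u w1 w2 t = (\<lambda>_. 0)"
proof
  fix k
  have opp_ser_term: "jac_defect (opp_ser Y om u e) w1 w2 s
      = (if e = - 2 * h then (\<lambda>k. (-1) powi h *\<^sub>C jac_defect u w1 w2 s k) else (\<lambda>_. 0))" for e s
    by (rule jac_defect_opp_ser_homogeneous[OF u lower])
  have "pair \<alpha> (jac_defect u w1 w2 t) = 0" if a: "\<alpha> \<in> gdual Y3 om" for \<alpha>
  proof -
    have "P_compatible Y om z Y1 Y2 (Fvee \<alpha>)"
      using comp a unfolding P_compatible_set_def Fdual_eq by blast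
    then have "fsum (\<lambda>e. pair \<alpha> (jac_defect (opp_ser Y om u e) w1 w2 (fst t, e + 2 * h + snd t))) = 0"
      using P_compatible_Fvee_iff[OF a, THEN iffD1, rule_format, of u w1 w2 "(fst t, - 2 * h - snd t)"]
      by (simp add: algebra_simps)
    also have "fsum (\<lambda>e. pair \<alpha> (jac_defect (opp_ser Y om u e) w1 w2 (fst t, e + 2 * h + snd t)))
        = pair \<alpha> (\<lambda>k. (-1) powi h *\<^sub>C jac_defect u w1 w2 t k)"
      by (subst fsum_single[where x="- 2 * h"])
        (simp_all add: opp_ser_term M3.pair_zero[OF a])
    also have "\<dots> = (-1) powi h * pair \<alpha> (jac_defect u w1 w2 t)"
      by (rule M3.pair_scale[OF a jac_defect_Wbar])
    finally show ?thesis by simp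
  qed
  then show "jac_defect u w1 w2 t k = 0" by (rule M3.Wbar_eq_0_if_pair_eq_0[OF jac_defect_Wbar])
qed

lemma jac_defect_zero_if_P_compatible:
  assumes comp: "P_compatible_set Y om z Y1 Y2 (Fdual Y3 om F)"
  shows "jac_defect u w1 w2 t = (\<lambda>_. 0)"
proof -
  obtain K where K: "\<forall>n<K. Vgr Y om n = {0}" using M1.Vgr_lower_bounded by blast
  have homogeneous: "jac_defect u w1 w2 t = (\<lambda>_. 0)" if "u \<in> Vgr Y om h" for u h w1 w2 t
    using that
  proof (induction "nat (h - K + 1)" arbitrary: h u w1 w2 t rule: less_induct)
    case less
    show ?case
    proof (cases "h < K")
      case True
      then show ?thesis using less.prems K by (simp add: jac_defect_zero)
    next
      case False
      show ?thesis
      proof (rule jac_defect_zero_step[OF comp less.prems])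
        fix j u' w1 w2 t assume "j \<ge> 1" "u' \<in> Vgr Y om (h - int j)"
        moreover have "nat (h - int j - K + 1) < nat (h - K + 1)"
          using False \<open>j \<ge> 1\<close> by (subst zless_nat_conj) linarith
        ultimately show "jac_defect u' w1 w2 t = (\<lambda>_. 0)" using less.hyps by blast
      qed
    qed
  qed
  obtain H where H: "finite H" "\<forall>h. h \<notin> H \<longrightarrow> dproj (Vgr Y om) h u = 0"
    using M1.V.dproj_finite_support by blast
  show ?thesis
  proof
    fix k
    have "jac_defect u w1 w2 t k = (\<Sum>h\<in>H. jac_defect (dproj (Vgr Y om) h u) w1 w2 t k)"
      by (subst M1.V.sum_dproj[OF H]) (rule jac_defect_sum)
    then show "jac_defect u w1 w2 t k = 0" using homogeneous[OF M1.V.dproj_in] by simp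
  qed
qed

lemma P_compatible_Fdual_iff_P_intw:
  "P_compatible_set Y om z Y1 Y2 (Fdual Y3 om F) \<longleftrightarrow> P_intw om z Y1 Y2 Y3 F"
  using P_compatible_Fdual_if_jac_defect_zero jac_defect_zero_if_P_compatible
  unfolding P_intw_iff_jac_defect_zero by blast

end

theorem mainTheorem6:
  fixes Y :: "'v::cvs \<Rightarrow> int \<Rightarrow> 'v \<Rightarrow> 'v" and vac om :: 'v and c z :: complex
    and Y1 :: "'v \<Rightarrow> int \<Rightarrow> 'a::cvs \<Rightarrow> 'a" and Y2 :: "'v \<Rightarrow> int \<Rightarrow> 'b::cvs \<Rightarrow> 'b"
    and Y3 :: "'v \<Rightarrow> int \<Rightarrow> 'c::cvs \<Rightarrow> 'c" and F :: "'a \<Rightarrow> 'b \<Rightarrow> complex \<Rightarrow> 'c"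
  assumes "VOA Y vac om c"
    and "z \<noteq> 0"
    and "gen_module Y vac om Y1" and "gen_module Y vac om Y2" and "gen_module Y vac om Y3"
    and "quasi_intw om z Y1 Y2 Y3 F"
  shows "P_compatible_set Y om z Y1 Y2 (Fdual Y3 om F) \<longleftrightarrow> P_intw om z Y1 Y2 Y3 F"
proof -
  interpret quasi_intw_setting Y vac om c Y1 Y2 Y3 z F
    by unfold_locales (use assms in auto)
  show ?thesis by (rule P_compatible_Fdual_iff_P_intw)
qed

end
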